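(* Let $\Lambda$ and $\Lambda'$ be two lattices in $\mathbb{C}$ with $\Lambda'\subset\Lambda$. Then every weakly bialgebraic set for $\mathcal{P}_{\Lambda'}$ is weakly bialgebraic for $\mathcal{P}_{\Lambda}$.
   Context: Identify $\mathbb{R}^2$ with $\mathbb{C}$ via $(x,y)\mapsto x+iy$. For a lattice $\Lambda\subset\mathbb{C}$ let $\wp_\Lambda$ be its Weierstrass $\wp$-function and $\mathcal{P}_\Lambda:\mathbb{R}^2\smallsetminus\Lambda\to\mathbb{R}^2$, $(x,y)\mapsto(\mathrm{Re}\,\wp_\Lambda(x+iy),\mathrm{Im}\,\wp_\Lambda(x+iy))$. A non-empty subset $\mathcal{V}\subsetneq\mathbb{R}^2$ is called weakly bialgebraic for $\mathcal{P}_\Lambda$ if (i) there exist algebraic subvarieties $V\subset\mathbb{A}^2_\mathbb{R}$ and $W\subsetneq\mathbb{A}^2_\mathbb{R}$ with $\mathcal{V}=V(\mathbb{R})$ and $\mathcal{P}_\Lambda(\mathcal{V}\cap(\mathbb{R}^2\smallsetminus\Lambda))\subset W(\mathbb{R})$; and (ii) $\mathcal{V}$ cannot be written as $V_1(\mathbb{R})\cup V_2(\mathbb{R})$ with $V_1,V_2\subset\mathbb{A}^2_\mathbb{R}$ algebraic subvarieties and both inclusions $V_i(\mathbb{R})\subset\mathcal{V}$ proper. *)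

theory Defs
  imports "HOL-Analysis.Analysis" "HOL-Computational_Algebra.Polynomial"
begin

definition is_lattice :: "complex set \<Rightarrow> bool" where
  "is_lattice L \<longleftrightarrow> (\<exists>w1 w2. w1 \<noteq> 0 \<and> Im (w2 / w1) \<noteq> 0 \<and>
      L = {of_int m * w1 + of_int n * w2 | m n :: int. True})"

text \<open>Weierstrass p-function: 1/z^2 + sum over nonzero lattice points of
  (1/(z-w)^2 - 1/w^2); the series converges absolutely, so the unconditional
  sum infsum is the usual value.\<close>
definition wp :: "complex set \<Rightarrow> complex \<Rightarrow> complex" where
  "wp L z = 1 / z\<^sup>2 + (\<Sum>\<^sub>\<infinity>w\<in>L - {0}. 1 / (z - w)\<^sup>2 - 1 / w\<^sup>2)"

definition PL :: "complex set \<Rightarrow> real \<times> real \<Rightarrow> real \<times> real" where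
  "PL L p = (Re (wp L (Complex (fst p) (snd p))), Im (wp L (Complex (fst p) (snd p))))"

definition lattice_pts :: "complex set \<Rightarrow> (real \<times> real) set" where
  "lattice_pts L = {p. Complex (fst p) (snd p) \<in> L}"

text \<open>Bivariate real polynomials R[x][y] represented as real poly poly
  (outer variable y, coefficients polynomials in x).\<close>
definition eval2 :: "real poly poly \<Rightarrow> real \<times> real \<Rightarrow> real" where
  "eval2 p q = poly (map_poly (\<lambda>c. poly c (fst q)) p) (snd q)"

definition zero_set :: "real poly poly set \<Rightarrow> (real \<times> real) set" where
  "zero_set F = {q. \<forall>p\<in>F. eval2 p q = 0}"

text \<open>Weakly bialgebraic sets. The subvariety W is proper (W \<noteq> A^2) iff its
  defining ideal is nonzero, i.e. some defining polynomial is nonzero.\<close>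
definition weakly_bialgebraic :: "complex set \<Rightarrow> (real \<times> real) set \<Rightarrow> bool" where
  "weakly_bialgebraic L S \<longleftrightarrow>
     S \<noteq> {} \<and> S \<noteq> UNIV \<and>
     (\<exists>F G. finite F \<and> finite G \<and> S = zero_set F \<and> (\<exists>g\<in>G. g \<noteq> 0) \<and>
        PL L ` (S - lattice_pts L) \<subseteq> zero_set G) \<and>
     \<not> (\<exists>F1 F2. finite F1 \<and> finite F2 \<and> zero_set F1 \<subset> S \<and> zero_set F2 \<subset> S \<and>
            S = zero_set F1 \<union> zero_set F2)"

end

theory Submission
  imports Defs "HOL-Complex_Analysis.Complex_Analysis"
begin

(* For lattices \<Lambda>' \<subseteq> \<Lambda>, the function \<wp>\<^sub>\<Lambda> is a rational function of \<wp>\<^sub>\<Lambda>\<^sub>'.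
   Since \<Lambda>/\<Lambda>' is finite, \<wp>\<^sub>\<Lambda>\<^sub>' takes only finitely many values on \<Lambda> - \<Lambda>'; multiplying
   \<wp>\<^sub>\<Lambda> by a polynomial in \<wp>\<^sub>\<Lambda>\<^sub>' with double zeros at these values removes the poles off \<Lambda>'.
   The product is even and \<Lambda>'-periodic with poles only on \<Lambda>', hence a polynomial in \<wp>\<^sub>\<Lambda>\<^sub>':
   subtracting multiples of powers of \<wp>\<^sub>\<Lambda>\<^sub>' lowers the pole order at 0 until Liouville's
   theorem applies.  Consequently P\<^sub>\<Lambda> = R \<circ> P\<^sub>\<Lambda>\<^sub>' off \<Lambda> for a real rational map R, and
   a rational map sends a real algebraic curve into a real algebraic curve, by counting
   dimensions of spaces of polynomials of bounded degree.  The other conditions in the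
   definition of weakly bialgebraic sets only concern the set itself. *)

section \<open>Lattice sums\<close>

lemma summable_on_one_plus_nat_powr:
  fixes a :: real
  assumes "a > 1"
  shows "(\<lambda>n::nat. (1 + real n) powr - a) summable_on UNIV"
proof -
  have "summable (\<lambda>n. real n powr - a)"
    using assms by (subst summable_real_powr_iff) simp
  then have "summable (\<lambda>n. (1 + real n) powr - a)"
    by (subst (asm) summable_Suc_iff[symmetric]) (simp add: add.commute)
  then show ?thesis
    by (subst summable_on_UNIV_nonneg_real_iff) simp_all
qed

lemma summable_on_one_plus_int_powr:
  fixes a :: real
  assumes "a > 1"
  shows "(\<lambda>m::int. (1 + \<bar>real_of_int m\<bar>) powr - a) summable_on UNIV"
proof -
  let ?f = "\<lambda>m::int. (1 + \<bar>real_of_int m\<bar>) powr - a"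
  have "?f summable_on range int"
    using summable_on_one_plus_nat_powr[OF assms] by (subst summable_on_reindex) (simp_all add: o_def)
  moreover have "?f summable_on range (\<lambda>n. - int n)"
    using summable_on_one_plus_nat_powr[OF assms]
    by (subst summable_on_reindex) (simp_all add: o_def inj_def)
  moreover have "UNIV = range int \<union> range (\<lambda>n. - int n)"
  proof (intro set_eqI iffI)
    fix m :: int
    show "m \<in> range int \<union> range (\<lambda>n. - int n)"
    proof (cases "m \<ge> 0")
      case True
      then have "m = int (nat m)" by simp
      then show ?thesis by blast
    next
      case False
      then have "m = - int (nat (- m))" by simp
      then show ?thesis by blast
    qed
  qed simp
  ultimately show ?thesis by (metis summable_on_union)
qed

lemma summable_on_int_pair_powr:
  fixes a :: real
  assumes "a > 1"
  shows "(\<lambda>(m, n). ((1 + \<bar>real_of_int m\<bar>) * (1 + \<bar>real_of_int n\<bar>)) powr - a) summable_on UNIV"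
proof -
  let ?f = "\<lambda>m::int. (1 + \<bar>real_of_int m\<bar>) powr - a"
  have "(\<lambda>(m, n). ?f m * ?f n) summable_on UNIV \<times> UNIV"
    using summable_on_one_plus_int_powr[OF assms]
    by (intro summable_on_SigmaI[where g = "\<lambda>m. ?f m * infsum ?f UNIV"])
       (auto intro!: has_sum_cmult_right has_sum_infsum summable_on_cmult_left)
  then show ?thesis by (simp add: powr_mult case_prod_unfold)
qed

lemma one_plus_abs_mult_le_sum_squares:
  fixes m n :: int
  assumes "(m, n) \<noteq> (0, 0)"
  shows "(1 + \<bar>real_of_int m\<bar>) * (1 + \<bar>real_of_int n\<bar>) \<le> 3 * (real_of_int m ^ 2 + real_of_int n ^ 2)"
proof -
  have abs_le_square: "\<bar>x\<bar> \<le> x^2" for x :: int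
  proof (cases "x = 0")
    case False
    then have "\<bar>x\<bar> * 1 \<le> \<bar>x\<bar> * \<bar>x\<bar>" by (intro mult_left_mono) auto
    then show ?thesis by (simp add: power2_eq_square)
  qed simp
  have "2 * (\<bar>m\<bar> * \<bar>n\<bar>) \<le> m^2 + n^2"
    using zero_le_power2[of "\<bar>m\<bar> - \<bar>n\<bar>"] by (simp add: power2_eq_square algebra_simps)
  moreover have "1 \<le> m^2 + n^2"
    using assms abs_le_square[of m] abs_le_square[of n] by (cases "m = 0") auto
  ultimately have "(1 + \<bar>m\<bar>) * (1 + \<bar>n\<bar>) \<le> 3 * (m^2 + n^2)"
    using abs_le_square[of m] abs_le_square[of n] by (simp add: algebra_simps)
  then have "real_of_int ((1 + \<bar>m\<bar>) * (1 + \<bar>n\<bar>)) \<le> real_of_int (3 * (m^2 + n^2))"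
    by (simp only: of_int_le_iff)
  then show ?thesis by simp
qed

lemma square_powr_three_halves:
  fixes x :: real
  assumes "x > 0"
  shows "(x^2) powr (3/2) = x^3"
proof -
  have "(x^2) powr (3/2) = (x powr 2) powr (3/2)"
    using assms by (simp add: powr_realpow)
  also have "\<dots> = x powr (real 3)"
    unfolding powr_powr by simp
  also have "\<dots> = x^3"
    using assms by (rule powr_realpow)
  finally show ?thesis .
qed

definition wp_summand :: "complex \<Rightarrow> complex \<Rightarrow> complex" where
  "wp_summand z \<omega> = 1 / (z - \<omega>)^2 - 1 / \<omega>^2"

lemma wp_summand_eq: "z \<noteq> \<omega> \<Longrightarrow> \<omega> \<noteq> 0 \<Longrightarrow> wp_summand z \<omega> = z * (2 * \<omega> - z) / ((z - \<omega>)^2 * \<omega>^2)"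
  unfolding wp_summand_def by (simp add: divide_simps) (simp add: power2_eq_square algebra_simps)

lemma norm_wp_summand_le:
  fixes R c d :: real
  assumes "norm z \<le> R" "c > 0" "c * norm \<omega> \<le> norm (z - \<omega>)" "d > 0" "d \<le> norm \<omega>"
  shows "norm (wp_summand z \<omega>) \<le> R * (2 + R / d) / c^2 / norm \<omega> ^ 3"
proof -
  have "0 \<le> R"
    using assms(1) by (auto intro: order_trans[OF norm_ge_zero])
  have "0 < c * norm \<omega>"
    using assms(2,4,5) by (intro mult_pos_pos) auto
  then have "\<omega> \<noteq> 0" "z \<noteq> \<omega>"
    using assms(3) by auto
  have "norm (z * (2 * \<omega> - z)) \<le> R * (2 * norm \<omega> + R)"
    unfolding norm_mult using assms(1) \<open>0 \<le> R\<close> norm_triangle_ineq4[of "2 * \<omega>" z]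
    by (intro mult_mono) (auto simp: norm_mult)
  moreover have "c^2 * norm \<omega> ^ 4 \<le> norm ((z - \<omega>)^2 * \<omega>^2)"
  proof -
    have "(c * norm \<omega>)^2 * norm \<omega> ^ 2 \<le> (norm (z - \<omega>))^2 * norm \<omega> ^ 2"
      using assms(2,3) by (intro mult_right_mono power_mono) auto
    then show ?thesis
      by (simp add: norm_mult norm_power power_mult_distrib power2_eq_square power4_eq_xxxx mult_ac)
  qed
  ultimately have "norm (wp_summand z \<omega>) \<le> R * (2 * norm \<omega> + R) / (c^2 * norm \<omega> ^ 4)"
    unfolding wp_summand_eq[OF \<open>z \<noteq> \<omega>\<close> \<open>\<omega> \<noteq> 0\<close>] norm_divide
    using \<open>0 \<le> R\<close> \<open>\<omega> \<noteq> 0\<close> assms(2) by (intro frac_le) auto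
  also have "\<dots> = R * (2 + R / norm \<omega>) / c^2 / norm \<omega> ^ 3"
    using \<open>\<omega> \<noteq> 0\<close> assms(2) by (simp add: field_simps power_numeral_reduce)
  also have "\<dots> \<le> R * (2 + R / d) / c^2 / norm \<omega> ^ 3"
    using \<open>0 \<le> R\<close> \<open>\<omega> \<noteq> 0\<close> assms(4,5)
    by (intro divide_right_mono mult_left_mono add_left_mono divide_left_mono) auto
  finally show ?thesis .
qed

lemma poly_altdef_le:
  fixes P :: "'a::comm_semiring_1 poly"
  assumes "degree P \<le> m"
  shows "poly P x = (\<Sum>i\<le>m. coeff P i * x ^ i)"
proof -
  have "poly P x = poly (\<Sum>i\<le>m. monom (coeff P i) i) x"
    by (simp only: poly_as_sum_of_monoms'[OF assms])
  then show ?thesis by (simp add: poly_sum poly_monom)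
qed

lemma holomorphic_on_poly_comp [holomorphic_intros]:
  assumes "f holomorphic_on S"
  shows "(\<lambda>z. poly P (f z)) holomorphic_on S"
  unfolding poly_altdef by (intro holomorphic_intros assms)

lemma holomorphic_mult_eq_0_cancel:
  assumes "f holomorphic_on S" "g holomorphic_on S" "open S" "connected S"
    and "w \<in> S" "g w \<noteq> 0" "\<And>z. z \<in> S \<Longrightarrow> g z * f z = 0" "z \<in> S"
  shows "f z = 0"
proof (rule ccontr)
  assume "f z \<noteq> 0"
  moreover have "continuous (at z) f"
    using assms(1,3,8) holomorphic_on_imp_continuous_on continuous_on_eq_continuous_at by blast
  ultimately obtain e where "e > 0" and f_nonzero: "\<And>y. dist z y < e \<Longrightarrow> f y \<noteq> 0"
    using continuous_at_avoid by blast
  obtain r where "r > 0" "ball z r \<subseteq> S"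
    using assms(3,8) open_contains_ball by blast
  have g_zero: "g y = 0" if "y \<in> ball z (min e r)" for y
  proof -
    have "dist z y < e" "y \<in> S"
      using that \<open>ball z r \<subseteq> S\<close> by auto
    then show ?thesis
      using f_nonzero assms(7)[of y] by simp
  qed
  have "ball z (min e r) \<subseteq> S" "ball z (min e r) \<noteq> {}"
    using \<open>e > 0\<close> \<open>r > 0\<close> \<open>ball z r \<subseteq> S\<close> by auto
  then have "g w = 0"
    using analytic_continuation_open[of "ball z (min e r)" S g "\<lambda>_. 0" w] g_zero assms(2-5)
    by simp
  with assms(6) show False ..
qed

lemma holomorphic_difference_quotient:
  assumes "f holomorphic_on S" "open S" "a \<in> S"
  obtains k where "isCont k a" "\<And>z. f z - f a = (z - a) * k z"
proof
  define k where "k z = (if z = a then deriv f a else (f z - f a) / (z - a))" for z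
  have "k holomorphic_on S"
    unfolding k_def[abs_def] using assms by (intro pole_lemma) (auto simp: interior_open)
  then show "isCont k a"
    using assms(2,3) holomorphic_on_imp_continuous_on continuous_on_eq_continuous_at by blast
  show "f z - f a = (z - a) * k z" for z
    by (simp add: k_def)
qed

lemma remove_sings_eq_compose:
  assumes "filtermap g (at z) = at (g z)" "eventually (\<lambda>w. f (g w) = f w) (at z)"
  shows "remove_sings f (g z) = remove_sings f z"
proof -
  have "remove_sings f (g z) = remove_sings (\<lambda>w. f (g w)) z"
    using remove_sings_compose[OF assms(1), of f] unfolding comp_def by (rule sym)
  also have "\<dots> = remove_sings f z"
    by (rule remove_sings_cong[OF assms(2) refl])
  finally show ?thesis .
qed

lemma remove_sings_analytic_on_removable:
  assumes "f analytic_on S - P"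
    and "\<And>p. p \<in> S \<inter> P \<Longrightarrow> isolated_singularity_at f p \<and> (\<exists>c. f \<midarrow>p\<rightarrow> c)"
  shows "remove_sings f analytic_on S"
proof (subst analytic_on_analytic_at, intro ballI)
  fix z assume "z \<in> S"
  show "remove_sings f analytic_on {z}"
  proof (cases "z \<in> P")
    case True
    then obtain c where "isolated_singularity_at f z" "f \<midarrow>z\<rightarrow> c"
      using assms(2) \<open>z \<in> S\<close> by blast
    then show ?thesis by (rule remove_sings_analytic_at)
  next
    case False
    have "f analytic_on {z}"
      using assms(1) by (rule analytic_on_subset) (use False \<open>z \<in> S\<close> in auto)
    then show ?thesis by (rule remove_sings_analytic_on)
  qed
qed

lemma deriv_even_0:
  fixes g :: "complex \<Rightarrow> complex"
  assumes "g holomorphic_on ball 0 r" "r > 0" "\<And>z. z \<in> ball 0 r \<Longrightarrow> g (- z) = g z"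
  shows "deriv g 0 = 0"
proof -
  have "(g has_field_derivative deriv g 0) (at 0)"
    using assms(1,2) by (intro holomorphic_derivI[OF _ open_ball]) auto
  then have "(g has_field_derivative deriv g 0) (at (- 0))"
    by simp
  moreover have "((\<lambda>z. - z) has_field_derivative - 1) (at (0::complex))"
    by (auto intro!: derivative_eq_intros)
  ultimately have "((\<lambda>z. g (- z)) has_field_derivative deriv g 0 * - 1) (at 0)"
    by (rule DERIV_chain2)
  then have "(g has_field_derivative deriv g 0 * - 1) (at 0)"
    by (rule has_field_derivative_transform_within_open[OF _ open_ball[of 0 r]]) (use assms(2,3) in auto)
  with \<open>(g has_field_derivative deriv g 0) (at 0)\<close> have "deriv g 0 = deriv g 0 * - 1"
    by (rule DERIV_unique)
  then show ?thesis by simp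
qed

lemma even_holomorphic_eq_square_mult:
  fixes g :: "complex \<Rightarrow> complex"
  assumes "g holomorphic_on ball 0 r" "r > 0" "\<And>z. z \<in> ball 0 r \<Longrightarrow> g (- z) = g z" "g 0 = 0"
  obtains k where "k holomorphic_on ball 0 r" "\<And>z. z \<in> ball 0 r \<Longrightarrow> g z = z^2 * k z"
proof -
  define k1 where "k1 z = (if z = 0 then deriv g 0 else (g z - g 0) / (z - 0))" for z
  define k where "k z = (if z = 0 then deriv k1 0 else (k1 z - k1 0) / (z - 0))" for z
  have "0 \<in> interior (ball (0::complex) r)" using assms(2) by simp
  then have "k1 holomorphic_on ball 0 r"
    unfolding k1_def[abs_def] by (rule pole_lemma[OF assms(1)])
  then have "k holomorphic_on ball 0 r"
    unfolding k_def[abs_def] using \<open>0 \<in> interior (ball 0 r)\<close> by (rule pole_lemma)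
  then show ?thesis
  proof (rule that)
    fix z :: complex
    have "k1 0 = 0"
      using deriv_even_0[OF assms(1-3)] by (simp add: k1_def)
    then show "g z = z^2 * k z"
      using assms(4) by (cases "z = 0") (simp_all add: k_def k1_def power2_eq_square)
  qed
qed

definition pole_order_at_0_le :: "nat \<Rightarrow> (complex \<Rightarrow> complex) \<Rightarrow> bool" where
  "pole_order_at_0_le k f \<longleftrightarrow>
     (\<exists>r>0. \<exists>g. g holomorphic_on ball 0 r \<and> (\<forall>z\<in>ball 0 r - {0}. g z = z^k * f z))"

lemma pole_order_at_0_leE:
  assumes "pole_order_at_0_le k f" "d > 0"
  obtains r g where "r > 0" "r \<le> d" "g holomorphic_on ball 0 r"
    "\<And>z. z \<in> ball 0 r - {0} \<Longrightarrow> g z = z^k * f z"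
proof -
  obtain r g where g: "r > 0" "g holomorphic_on ball 0 r" "\<forall>z\<in>ball 0 r - {0}. g z = z^k * f z"
    using assms(1) unfolding pole_order_at_0_le_def by blast
  show ?thesis
  proof (rule that[of "min r d" g])
    show "g holomorphic_on ball 0 (min r d)"
      using g(2) by (rule holomorphic_on_subset) auto
  qed (use g assms(2) in auto)
qed

lemma pole_order_at_0_leI:
  assumes "r > 0" "g holomorphic_on ball 0 r" "\<And>z. z \<in> ball 0 r - {0} \<Longrightarrow> g z = z^k * f z"
  shows "pole_order_at_0_le k f"
  unfolding pole_order_at_0_le_def using assms by blast

lemma pole_order_at_0_le_cong:
  assumes "pole_order_at_0_le k f" "d > 0" "\<And>z. z \<in> ball 0 d - {0} \<Longrightarrow> f z = f' z"
  shows "pole_order_at_0_le k f'"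
proof -
  obtain r g where "r > 0" "r \<le> d" "g holomorphic_on ball 0 r"
    "\<And>z. z \<in> ball 0 r - {0} \<Longrightarrow> g z = z^k * f z"
    using pole_order_at_0_leE[OF assms(1,2)] by blast
  then show ?thesis
    using assms(3) by (intro pole_order_at_0_leI[of r g]) auto
qed

lemma pole_order_at_0_le_mult:
  assumes "pole_order_at_0_le a f" "pole_order_at_0_le b g"
  shows "pole_order_at_0_le (a + b) (\<lambda>z. f z * g z)"
proof -
  obtain r F where F: "r > 0" "F holomorphic_on ball 0 r" "\<And>z. z \<in> ball 0 r - {0} \<Longrightarrow> F z = z^a * f z"
    using assms(1) unfolding pole_order_at_0_le_def by blast
  obtain s G where G: "s > 0" "s \<le> r" "G holomorphic_on ball 0 s" "\<And>z. z \<in> ball 0 s - {0} \<Longrightarrow> G z = z^b * g z"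
    using pole_order_at_0_leE[OF assms(2) F(1)] by blast
  have "ball 0 s \<subseteq> ball (0::complex) r" using G(2) by auto
  then show ?thesis
    using F G by (intro pole_order_at_0_leI[of s "\<lambda>z. F z * G z"] holomorphic_intros)
      (auto intro: holomorphic_on_subset simp: power_add)
qed

lemma pole_order_at_0_le_if_even_vanishing:
  assumes "r > 0" "G holomorphic_on ball 0 r" "\<And>z. z \<in> ball 0 r \<Longrightarrow> G (- z) = G z" "G 0 = 0"
    and "\<And>z. z \<in> ball 0 r - {0} \<Longrightarrow> G z = z^(Suc (Suc k)) * f z"
  shows "pole_order_at_0_le k f"
proof -
  obtain h where h: "h holomorphic_on ball 0 r" "\<And>z. z \<in> ball 0 r \<Longrightarrow> G z = z^2 * h z"
    using even_holomorphic_eq_square_mult[OF assms(2,1,3,4)] by blast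
  have "h z = z^k * f z" if "z \<in> ball 0 r - {0}" for z
    using h(2)[of z] assms(5)[OF that] that by (simp add: power2_eq_square)
  with assms(1) h(1) show ?thesis
    by (intro pole_order_at_0_leI[of r h]) auto
qed

lemma pole_order_at_0_le_0_tendsto:
  assumes "pole_order_at_0_le 0 f"
  shows "\<exists>c. f \<midarrow>0\<rightarrow> c"
proof -
  obtain r g where "r > 0" "g holomorphic_on ball 0 r" "\<forall>z\<in>ball 0 r - {0}. g z = f z"
    using assms unfolding pole_order_at_0_le_def by auto
  moreover from this have "isCont g 0"
    by (intro continuous_on_interior[OF holomorphic_on_imp_continuous_on]) auto
  then have "g \<midarrow>0\<rightarrow> g 0"
    by (rule isContD)
  moreover have "eventually (\<lambda>z. z \<in> ball 0 r - {0}) (at (0::complex))"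
    using \<open>r > 0\<close> by (intro eventually_at_in_open) auto
  ultimately have "f \<midarrow>0\<rightarrow> g 0"
    by (metis (mono_tags, lifting) eventually_mono tendsto_cong)
  then show ?thesis ..
qed

section \<open>Lattices and the Weierstrass function\<close>

locale complex_lattice =
  fixes w1 w2 :: complex
  assumes w1_nonzero: "w1 \<noteq> 0" and basis_independent: "Im (w2 / w1) \<noteq> 0"
begin

definition lattice_point :: "int \<times> int \<Rightarrow> complex" where
  "lattice_point p = of_int (fst p) * w1 + of_int (snd p) * w2"

definition \<Lambda> :: "complex set" where
  "\<Lambda> = range lattice_point"

lemma in_lattice_iff: "z \<in> \<Lambda> \<longleftrightarrow> (\<exists>m n::int. z = of_int m * w1 + of_int n * w2)"
proof
  assume "z \<in> \<Lambda>"
  then obtain p where "z = lattice_point p" unfolding \<Lambda>_def by blast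
  then show "\<exists>m n::int. z = of_int m * w1 + of_int n * w2"
    by (intro exI[of _ "fst p"] exI[of _ "snd p"]) (simp add: lattice_point_def)
next
  assume "\<exists>m n::int. z = of_int m * w1 + of_int n * w2"
  then obtain m n :: int where "z = lattice_point (m, n)" by (auto simp: lattice_point_def)
  then show "z \<in> \<Lambda>" unfolding \<Lambda>_def by blast
qed

lemma \<Lambda>_eq: "\<Lambda> = {of_int m * w1 + of_int n * w2 | m n :: int. True}"
  using in_lattice_iff by blast

lemma lattice_zero [simp]: "0 \<in> \<Lambda>"
  and lattice_w1 [simp]: "w1 \<in> \<Lambda>"
  and lattice_w2 [simp]: "w2 \<in> \<Lambda>"
  unfolding in_lattice_iff
  by (rule exI[of _ 0] exI[of _ 1], rule exI[of _ 0] exI[of _ 1], simp)+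

lemma lattice_add [intro]:
  assumes "a \<in> \<Lambda>" "b \<in> \<Lambda>"
  shows "a + b \<in> \<Lambda>"
proof -
  obtain p q where "a = lattice_point p" "b = lattice_point q"
    using assms unfolding \<Lambda>_def by blast
  then have "a + b = lattice_point (fst p + fst q, snd p + snd q)"
    by (simp add: lattice_point_def algebra_simps)
  then show ?thesis unfolding \<Lambda>_def by blast
qed

lemma lattice_int_mult [intro]:
  assumes "a \<in> \<Lambda>"
  shows "of_int k * a \<in> \<Lambda>"
proof -
  obtain p where "a = lattice_point p"
    using assms unfolding \<Lambda>_def by blast
  then have "of_int k * a = lattice_point (k * fst p, k * snd p)"
    by (simp add: lattice_point_def algebra_simps)
  then show ?thesis unfolding \<Lambda>_def by blast
qed

lemma lattice_uminus_iff [simp]: "- a \<in> \<Lambda> \<longleftrightarrow> a \<in> \<Lambda>"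
  using lattice_int_mult[of a "-1"] lattice_int_mult[of "-a" "-1"] by auto

lemma lattice_diff [intro]: "a \<in> \<Lambda> \<Longrightarrow> b \<in> \<Lambda> \<Longrightarrow> a - b \<in> \<Lambda>"
  using lattice_add[of a "- b"] by simp

lemma lattice_add_iff: "b \<in> \<Lambda> \<Longrightarrow> a + b \<in> \<Lambda> \<longleftrightarrow> a \<in> \<Lambda>"
  using lattice_diff[of "a + b" b] by auto

lemma lattice_diff_iff: "b \<in> \<Lambda> \<Longrightarrow> a - b \<in> \<Lambda> \<longleftrightarrow> a \<in> \<Lambda>"
  using lattice_add_iff[of "- b" a] by simp

lemma basis_real_independent:
  fixes x y :: real
  assumes "of_real x * w1 + of_real y * w2 = 0"
  shows "x = 0 \<and> y = 0"
proof -
  define t where "t = w2 / w1"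
  have "of_real x + of_real y * t = 0"
    using assms w1_nonzero by (simp add: t_def field_simps)
  then have "x + y * Re t = 0" "y * Im t = 0"
    by (simp_all add: complex_eq_iff)
  then show ?thesis using basis_independent by (simp add: t_def)
qed

lemma lattice_point_eq_0_iff [simp]: "lattice_point p = 0 \<longleftrightarrow> p = (0, 0)"
  using basis_real_independent[of "of_int (fst p)" "of_int (snd p)"]
  by (cases p) (auto simp: lattice_point_def)

lemma inj_lattice_point: "inj lattice_point"
proof (rule injI)
  fix p q assume "lattice_point p = lattice_point q"
  then have "lattice_point (fst p - fst q, snd p - snd q) = 0"
    by (simp add: lattice_point_def algebra_simps)
  then show "p = q" by (simp add: prod_eq_iff)
qed

lemma countable_lattice: "countable \<Lambda>"
  unfolding \<Lambda>_def by simp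

lemma half_w1_notin_lattice: "w1 / 2 \<notin> \<Lambda>"
proof
  assume "w1 / 2 \<in> \<Lambda>"
  then obtain m n :: int where "w1 / 2 = of_int m * w1 + of_int n * w2"
    unfolding in_lattice_iff by blast
  then have "of_real (of_int m - 1/2) * w1 + of_real (of_int n) * w2 = 0"
    by (simp add: algebra_simps)
  then have "real_of_int m - 1/2 = 0"
    by (rule basis_real_independent[THEN conjunct1])
  then have "2 * m = 1" by linarith
  then show False by presburger
qed

lemma norm_basis_combination_lower_bound:
  obtains k where "k > 0" "\<And>x y :: real. k * (x^2 + y^2) \<le> (norm (of_real x * w1 + of_real y * w2))^2"
proof
  define t where "t = w2 / w1"
  define r s where "r = Re t" and "s = Im t"
  have "s \<noteq> 0" using basis_independent by (simp add: s_def t_def)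
  show "(norm w1)^2 * (s^2 / (1 + r^2 + s^2)) > 0"
    using \<open>s \<noteq> 0\<close> w1_nonzero by (simp add: add_pos_nonneg)
  fix x y :: real
  have "of_real x * w1 + of_real y * w2 = w1 * (of_real x + of_real y * t)"
    using w1_nonzero by (simp add: t_def field_simps)
  then have norm_eq: "(norm (of_real x * w1 + of_real y * w2))^2
      = (norm w1)^2 * ((x + y * r)^2 + (y * s)^2)"
    by (simp add: norm_mult power_mult_distrib cmod_power2 r_def s_def)
  \<comment> \<open>the difference of the two sides times \<open>1 + r\<^sup>2 + s\<^sup>2\<close> is a sum of two squares\<close>
  have "((x + y * r)^2 + (y * s)^2) * (1 + r^2 + s^2) - s^2 * (x^2 + y^2)
        = (x + y * r)^2 + ((x + y * r) * r + y * s^2)^2"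
    by (simp add: algebra_simps power2_eq_square)
  then have "s^2 / (1 + r^2 + s^2) * (x^2 + y^2) \<le> (x + y * r)^2 + (y * s)^2"
    by (simp add: field_simps add_pos_nonneg)
  then show "(norm w1)^2 * (s^2 / (1 + r^2 + s^2)) * (x^2 + y^2)
      \<le> (norm (of_real x * w1 + of_real y * w2))^2"
    unfolding norm_eq mult.assoc by (rule mult_left_mono) simp
qed

lemma lattice_separated:
  obtains d where "d > 0" "\<And>\<omega>. \<omega> \<in> \<Lambda> \<Longrightarrow> \<omega> \<noteq> 0 \<Longrightarrow> d \<le> norm \<omega>"
proof -
  obtain k where k: "k > 0" "\<And>x y :: real. k * (x^2 + y^2) \<le> (norm (of_real x * w1 + of_real y * w2))^2"
    using norm_basis_combination_lower_bound by blast
  have "sqrt k \<le> norm \<omega>" if \<omega>: "\<omega> \<in> \<Lambda>" "\<omega> \<noteq> 0" for \<omega>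
  proof -
    obtain m n :: int where mn: "\<omega> = of_int m * w1 + of_int n * w2"
      using \<omega>(1) unfolding in_lattice_iff by blast
    then have "(m, n) \<noteq> (0, 0)" using \<omega>(2) by auto
    then have "(1::int) \<le> m^2 + n^2"
      using sum_power2_gt_zero_iff[of m n] by simp
    then have "real_of_int 1 \<le> real_of_int (m^2 + n^2)"
      by (simp only: of_int_le_iff)
    then have "1 \<le> real_of_int m ^ 2 + real_of_int n ^ 2" by simp
    then have "k \<le> k * (real_of_int m ^ 2 + real_of_int n ^ 2)" using k(1) by simp
    also have "\<dots> \<le> (norm \<omega>)^2" using k(2)[of "of_int m" "of_int n"] mn by simp
    finally show ?thesis by (simp add: real_le_lsqrt)
  qed
  with k(1) that[of "sqrt k"] show ?thesis by auto
qed

lemma ball_inter_lattice: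
  obtains d where "d > 0" "ball 0 d \<inter> \<Lambda> = {0}"
proof -
  obtain d where "d > 0" "\<And>\<omega>. \<omega> \<in> \<Lambda> \<Longrightarrow> \<omega> \<noteq> 0 \<Longrightarrow> d \<le> norm \<omega>"
    using lattice_separated by blast
  then show ?thesis using that[of d] by force
qed

lemma lattice_not_islimpt: "\<not> z islimpt \<Lambda>"
proof -
  obtain d where d: "d > 0" "\<And>\<omega>. \<omega> \<in> \<Lambda> \<Longrightarrow> \<omega> \<noteq> 0 \<Longrightarrow> d \<le> norm \<omega>"
    using lattice_separated by blast
  show ?thesis
  proof (rule discrete_imp_not_islimpt[OF d(1)])
    fix x y assume "x \<in> \<Lambda>" "y \<in> \<Lambda>" "dist y x < d"
    then show "y = x" using d(2)[of "y - x"] by (force simp: dist_norm)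
  qed
qed

lemma eventually_not_in_lattice: "eventually (\<lambda>y. y \<notin> \<Lambda>) (at z)"
  using lattice_not_islimpt islimpt_iff_eventually by blast

lemma closed_lattice: "closed \<Lambda>"
  using lattice_not_islimpt closed_limpt by blast

lemma open_lattice_complement: "open (- \<Lambda>)"
  using closed_lattice by (simp add: open_Compl)

lemma isolated_singularity_at_lattice:
  assumes "f holomorphic_on - \<Lambda>"
  shows "isolated_singularity_at f z"
proof -
  obtain r where "r > 0" "\<And>y. y \<noteq> z \<Longrightarrow> dist y z < r \<Longrightarrow> y \<notin> \<Lambda>"
    using eventually_not_in_lattice[of z] unfolding eventually_at by blast
  then have "ball z r - {z} \<subseteq> - \<Lambda>" by (auto simp: dist_commute)
  then have "f analytic_on ball z r - {z}"
    using assms by (subst analytic_on_open) (auto intro: holomorphic_on_subset)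
  with \<open>r > 0\<close> show ?thesis unfolding isolated_singularity_at_def by blast
qed

lemma inverse_cube_norm_lattice_point_le:
  obtains C where "\<And>p. p \<noteq> (0, 0) \<Longrightarrow>
    1 / norm (lattice_point p) ^ 3 \<le> C * ((1 + \<bar>real_of_int (fst p)\<bar>) * (1 + \<bar>real_of_int (snd p)\<bar>)) powr - (3/2)"
proof -
  obtain k where k: "k > 0" "\<And>x y :: real. k * (x^2 + y^2) \<le> (norm (of_real x * w1 + of_real y * w2))^2"
    using norm_basis_combination_lower_bound by blast
  define P where "P p = (1 + \<bar>real_of_int (fst p)\<bar>) * (1 + \<bar>real_of_int (snd p)\<bar>)" for p
  have "1 / norm (lattice_point p) ^ 3 \<le> (k / 3) powr - (3/2) * P p powr - (3/2)"
    if "p \<noteq> (0, 0)" for p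
  proof -
    have "P p > 0" unfolding P_def by (simp add: add_pos_nonneg)
    have "k / 3 * P p \<le> k * (real_of_int (fst p) ^ 2 + real_of_int (snd p) ^ 2)"
      using one_plus_abs_mult_le_sum_squares[of "fst p" "snd p"] that k(1) unfolding P_def by simp
    also have "\<dots> \<le> (norm (lattice_point p))^2"
      using k(2)[of "of_int (fst p)" "of_int (snd p)"] by (simp add: lattice_point_def)
    finally have "(k / 3 * P p) powr (3/2) \<le> ((norm (lattice_point p))^2) powr (3/2)"
      using \<open>P p > 0\<close> k(1) by (intro powr_mono2) auto
    also have "\<dots> = norm (lattice_point p) ^ 3"
      using that by (simp add: square_powr_three_halves)
    finally have "1 / norm (lattice_point p) ^ 3 \<le> 1 / (k / 3 * P p) powr (3/2)"
      using \<open>P p > 0\<close> k(1) that by (intro divide_left_mono) auto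
    also have "\<dots> = (k / 3) powr - (3/2) * P p powr - (3/2)"
      using \<open>P p > 0\<close> k(1) by (subst powr_mult) (auto simp: powr_minus_divide)
    finally show ?thesis .
  qed
  then show ?thesis
    using that unfolding P_def by blast
qed

lemma summable_on_lattice_inverse_cube: "(\<lambda>\<omega>. 1 / norm \<omega> ^ 3) summable_on (\<Lambda> - {0})"
proof -
  obtain C where C: "\<And>p. p \<noteq> (0, 0) \<Longrightarrow>
      1 / norm (lattice_point p) ^ 3 \<le> C * ((1 + \<bar>real_of_int (fst p)\<bar>) * (1 + \<bar>real_of_int (snd p)\<bar>)) powr - (3/2)"
    using inverse_cube_norm_lattice_point_le by blast
  have "(\<lambda>p. ((1 + \<bar>real_of_int (fst p)\<bar>) * (1 + \<bar>real_of_int (snd p)\<bar>)) powr - (3/2)) summable_on UNIV - {(0, 0)}"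
    using summable_on_int_pair_powr[of "3/2"] unfolding case_prod_unfold
    by (rule summable_on_subset) simp_all
  then have "(\<lambda>p. C * ((1 + \<bar>real_of_int (fst p)\<bar>) * (1 + \<bar>real_of_int (snd p)\<bar>)) powr - (3/2))
      summable_on UNIV - {(0, 0)}"
    by (rule summable_on_cmult_right)
  then have "(\<lambda>p. 1 / norm (lattice_point p) ^ 3) summable_on UNIV - {(0, 0)}"
    by (rule summable_on_comparison_test) (use C in auto)
  moreover have "\<Lambda> - {0} = lattice_point ` (UNIV - {(0, 0)})"
    unfolding \<Lambda>_def by auto
  ultimately show ?thesis
    using summable_on_reindex[OF inj_on_subset[OF inj_lattice_point subset_UNIV],
        where g = "\<lambda>\<omega>. 1 / norm \<omega> ^ 3"]
    by (simp add: o_def)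
qed

definition wp_tail :: "complex \<Rightarrow> complex" where
  "wp_tail z = (\<Sum>\<^sub>\<infinity>\<omega>\<in>\<Lambda> - {0}. wp_summand z \<omega>)"

lemma wp_eq: "wp \<Lambda> z = 1 / z^2 + wp_tail z"
  unfolding wp_def wp_tail_def wp_summand_def ..

lemma wp_tail_0 [simp]: "wp_tail 0 = 0"
  unfolding wp_tail_def wp_summand_def by simp

lemma closed_lattice_minus_0: "closed (\<Lambda> - {0})"
proof -
  obtain d where "d > 0" "ball 0 d \<inter> \<Lambda> = {0}"
    using ball_inter_lattice by blast
  then have "\<Lambda> - {0} = \<Lambda> \<inter> - ball 0 d" by auto
  then show ?thesis using closed_lattice by (simp add: closed_Int closed_Compl)
qed

lemma wp_summand_bound_on_compact:
  assumes "compact K" "K \<inter> (\<Lambda> - {0}) = {}"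
  obtains C where "\<And>z \<omega>. z \<in> K \<Longrightarrow> \<omega> \<in> \<Lambda> - {0} \<Longrightarrow> norm (wp_summand z \<omega>) \<le> C / norm \<omega> ^ 3"
proof -
  obtain d where d: "d > 0" "\<And>\<omega>. \<omega> \<in> \<Lambda> \<Longrightarrow> \<omega> \<noteq> 0 \<Longrightarrow> d \<le> norm \<omega>"
    using lattice_separated by blast
  obtain \<delta> where \<delta>: "\<delta> > 0" "\<And>z \<omega>. z \<in> K \<Longrightarrow> \<omega> \<in> \<Lambda> - {0} \<Longrightarrow> \<delta> \<le> dist z \<omega>"
    using separate_compact_closed[OF assms(1) closed_lattice_minus_0 assms(2)] by blast
  obtain R where R: "R \<ge> 0" "\<And>z. z \<in> K \<Longrightarrow> norm z \<le> R"
    using compact_imp_bounded[OF assms(1)] unfolding bounded_iff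
    by (metis linorder_linear norm_ge_zero order_trans)
  define c where "c = min (1/2) (\<delta> / (2 * R + 1))"
  have "c > 0" unfolding c_def using \<delta>(1) R(1) by auto
  have "c * norm \<omega> \<le> norm (z - \<omega>)" if z: "z \<in> K" and \<omega>: "\<omega> \<in> \<Lambda> - {0}" for z \<omega>
  proof (cases "norm \<omega> \<ge> 2 * R")
    case True
    then have "norm \<omega> / 2 \<le> norm (z - \<omega>)"
      using R(2)[OF z] norm_triangle_ineq2[of \<omega> z] by (simp add: norm_minus_commute)
    moreover have "c \<le> 1/2"
      unfolding c_def by (rule min.cobounded1)
    then have "c * norm \<omega> \<le> 1/2 * norm \<omega>"
      by (intro mult_right_mono) auto
    ultimately show ?thesis by simp
  next
    case False
    have "c * norm \<omega> \<le> \<delta> / (2 * R + 1) * (2 * R + 1)"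
      unfolding c_def using False R(1) \<delta>(1) by (intro mult_mono) auto
    also have "\<dots> \<le> norm (z - \<omega>)"
      using R(1) \<delta>(2)[OF z \<omega>] by (simp add: dist_norm)
    finally show ?thesis .
  qed
  then show ?thesis
    using that[of "R * (2 + R / d) / c^2"] norm_wp_summand_le[OF R(2) \<open>c > 0\<close> _ d(1)] d(2)
    by (simp add: dist_norm)
qed

lemma wp_summand_summable:
  assumes "z \<notin> \<Lambda> - {0}"
  shows "wp_summand z summable_on (\<Lambda> - {0})"
proof -
  have "compact {z}" "{z} \<inter> (\<Lambda> - {0}) = {}"
    using assms by auto
  then obtain C where C: "\<And>\<omega>. \<omega> \<in> \<Lambda> - {0} \<Longrightarrow> norm (wp_summand z \<omega>) \<le> C / norm \<omega> ^ 3"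
    by (rule wp_summand_bound_on_compact) blast
  have "(\<lambda>\<omega>. C * (1 / norm \<omega> ^ 3)) summable_on (\<Lambda> - {0})"
    using summable_on_lattice_inverse_cube by (rule summable_on_cmult_right)
  then have "(\<lambda>\<omega>. norm (wp_summand z \<omega>)) summable_on (\<Lambda> - {0})"
    by (rule Infinite_Sum.abs_summable_on_comparison_test') (use C in simp)
  then show ?thesis by (rule abs_summable_summable)
qed

lemma holomorphic_wp_tail_on_ball:
  assumes "r > 0" "cball z0 r \<subseteq> - (\<Lambda> - {0})"
  shows "wp_tail holomorphic_on ball z0 r"
proof -
  obtain C where C: "\<And>z \<omega>. z \<in> cball z0 r \<Longrightarrow> \<omega> \<in> \<Lambda> - {0} \<Longrightarrow> norm (wp_summand z \<omega>) \<le> C / norm \<omega> ^ 3"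
    using wp_summand_bound_on_compact[of "cball z0 r"] assms(2) by auto
  have "(\<lambda>\<omega>. C / norm \<omega> ^ 3) summable_on (\<Lambda> - {0})"
    using summable_on_cmult_right[OF summable_on_lattice_inverse_cube, of C] by simp
  then have limit: "uniform_limit (cball z0 r) (\<lambda>X z. \<Sum>\<omega>\<in>X. wp_summand z \<omega>) wp_tail
      (finite_subsets_at_top (\<Lambda> - {0}))"
    unfolding wp_tail_def by (intro Weierstrass_m_test_general) (use C in auto)
  have partial_sums: "\<forall>\<^sub>F X in finite_subsets_at_top (\<Lambda> - {0}).
      continuous_on (cball z0 r) (\<lambda>z. \<Sum>\<omega>\<in>X. wp_summand z \<omega>) \<and>
      (\<lambda>z. \<Sum>\<omega>\<in>X. wp_summand z \<omega>) holomorphic_on ball z0 r"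
  proof (rule eventually_finite_subsets_at_top_weakI)
    fix X assume "finite X" "X \<subseteq> \<Lambda> - {0}"
    then have "(\<lambda>z. \<Sum>\<omega>\<in>X. wp_summand z \<omega>) holomorphic_on cball z0 r"
      unfolding wp_summand_def using assms(2) by (intro holomorphic_intros) auto
    then show "continuous_on (cball z0 r) (\<lambda>z. \<Sum>\<omega>\<in>X. wp_summand z \<omega>) \<and>
        (\<lambda>z. \<Sum>\<omega>\<in>X. wp_summand z \<omega>) holomorphic_on ball z0 r"
      using holomorphic_on_imp_continuous_on holomorphic_on_subset ball_subset_cball by blast
  qed
  show ?thesis
    using holomorphic_uniform_limit[OF partial_sums limit] by auto
qed

lemma holomorphic_wp_tail: "wp_tail holomorphic_on - (\<Lambda> - {0})"
proof -
  have "open (- (\<Lambda> - {0}))"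
    using closed_lattice_minus_0 by (rule open_Compl)
  have "wp_tail analytic_on {z}" if z: "z \<in> - (\<Lambda> - {0})" for z
  proof -
    obtain r where "r > 0" "cball z r \<subseteq> - (\<Lambda> - {0})"
      using \<open>open (- (\<Lambda> - {0}))\<close> z by (meson open_contains_cball)
    then show ?thesis
      unfolding analytic_at_ball by (intro exI[of _ r] conjI holomorphic_wp_tail_on_ball)
  qed
  then have "wp_tail analytic_on - (\<Lambda> - {0})"
    by (subst analytic_on_analytic_at) blast
  then show ?thesis
    by (rule analytic_imp_holomorphic)
qed

lemma holomorphic_wp: "wp \<Lambda> holomorphic_on - \<Lambda>"
  unfolding wp_eq[abs_def]
  by (intro holomorphic_intros holomorphic_on_subset[OF holomorphic_wp_tail]) auto

lemma continuous_wp: "z \<notin> \<Lambda> \<Longrightarrow> isCont (wp \<Lambda>) z"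
  using holomorphic_wp open_lattice_complement
  by (meson ComplI continuous_on_eq_continuous_at holomorphic_on_imp_continuous_on)

lemma continuous_wp_tail: "z \<notin> \<Lambda> - {0} \<Longrightarrow> isCont wp_tail z"
  using holomorphic_wp_tail closed_lattice_minus_0
  by (meson ComplI continuous_on_eq_continuous_at holomorphic_on_imp_continuous_on open_Compl)

lemma wp_tail_minus: "wp_tail (- z) = wp_tail z"
proof -
  have "uminus ` (\<Lambda> - {0}) = \<Lambda> - {0}"
  proof (intro equalityI subsetI)
    fix \<omega> assume "\<omega> \<in> \<Lambda> - {0}"
    then show "\<omega> \<in> uminus ` (\<Lambda> - {0})"
      by (intro image_eqI[of _ _ "- \<omega>"]) auto
  qed auto
  then have "wp_tail z = (\<Sum>\<^sub>\<infinity>\<omega>\<in>uminus ` (\<Lambda> - {0}). wp_summand z \<omega>)"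
    unfolding wp_tail_def by simp
  also have "\<dots> = (\<Sum>\<^sub>\<infinity>\<omega>\<in>\<Lambda> - {0}. wp_summand z (- \<omega>))"
    by (subst infsum_reindex) (auto simp: o_def)
  also have "\<dots> = wp_tail (- z)"
    unfolding wp_tail_def wp_summand_def by (simp add: power2_commute add.commute)
  finally show ?thesis ..
qed

lemma wp_minus: "wp \<Lambda> (- z) = wp \<Lambda> z"
  unfolding wp_eq wp_tail_minus by simp

lemma square_mult_wp: "z \<noteq> 0 \<Longrightarrow> z^2 * wp \<Lambda> z = 1 + z^2 * wp_tail z"
  unfolding wp_eq by (simp add: field_simps)

lemma notin_lattice_if_in_ball:
  assumes "ball 0 d \<inter> \<Lambda> = {0}" "z \<in> ball 0 d" "z \<noteq> 0"
  shows "z \<notin> \<Lambda>"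
proof
  assume "z \<in> \<Lambda>"
  with assms(2) have "z \<in> ball 0 d \<inter> \<Lambda>" by blast
  with assms(1,3) show False by blast
qed

lemma holomorphic_wp_tail_ball: "ball 0 d \<inter> \<Lambda> = {0} \<Longrightarrow> wp_tail holomorphic_on ball 0 d"
  by (rule holomorphic_on_subset[OF holomorphic_wp_tail]) auto

lemma filterlim_wp_at_0: "filterlim (wp \<Lambda>) at_infinity (at 0)"
proof -
  have "wp_tail \<midarrow>0\<rightarrow> 0"
    using continuous_wp_tail[of 0] by (simp add: isCont_def)
  moreover have "filterlim (\<lambda>z::complex. 1 / z^2) at_infinity (at 0)"
    using is_pole_inverse_power[of 2 0] unfolding is_pole_def by simp
  ultimately have "filterlim (\<lambda>z. wp_tail z + 1 / z^2) at_infinity (at 0)"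
    by (rule tendsto_add_filterlim_at_infinity)
  then show ?thesis
    by (simp add: wp_eq[abs_def] add.commute)
qed

lemma connected_lattice_complement: "connected (- \<Lambda>)"
  using path_connected_complement_countable[OF _ countable_lattice]
  by (simp add: path_connected_imp_connected)

lemma wp_summand_summable_on_lattice:
  assumes "z \<notin> \<Lambda>"
  shows "wp_summand z summable_on \<Lambda>"
proof -
  have "\<Lambda> = insert 0 (\<Lambda> - {0})" by auto
  moreover have "wp_summand z summable_on \<Lambda> - {0}"
    using assms by (intro wp_summand_summable) auto
  ultimately show ?thesis by (metis summable_on_insert_iff)
qed

text \<open>As \<open>1 / 0 = 0\<close>, the summand at \<open>\<omega> = 0\<close> is \<open>1 / z\<^sup>2\<close>.\<close>

lemma wp_eq_infsum_lattice:
  assumes "z \<notin> \<Lambda>"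
  shows "wp \<Lambda> z = (\<Sum>\<^sub>\<infinity>\<omega>\<in>\<Lambda>. wp_summand z \<omega>)"
proof -
  have "(\<Sum>\<^sub>\<infinity>\<omega>\<in>insert 0 (\<Lambda> - {0}). wp_summand z \<omega>) = wp_summand z 0 + wp_tail z"
    unfolding wp_tail_def using assms by (intro infsum_insert wp_summand_summable) auto
  then show ?thesis
    by (simp add: insert_absorb wp_eq wp_summand_def)
qed

lemma wp_shift_lattice:
  assumes "\<omega> \<in> \<Lambda>"
  obtains K where "\<And>z. z \<notin> \<Lambda> \<Longrightarrow> wp \<Lambda> (z + \<omega>) = wp \<Lambda> z + K"
proof
  fix z assume "z \<notin> \<Lambda>"
  then have "z + \<omega> \<notin> \<Lambda>" using assms lattice_add_iff by blast
  have bij: "bij_betw (\<lambda>\<mu>. \<mu> - \<omega>) \<Lambda> \<Lambda>"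
    using assms by (intro bij_betwI[of _ _ _ "\<lambda>\<mu>. \<mu> + \<omega>"]) auto
  have shifted: "(\<lambda>\<mu>. wp_summand z (\<mu> - \<omega>)) summable_on \<Lambda>"
    "(\<Sum>\<^sub>\<infinity>\<mu>\<in>\<Lambda>. wp_summand z (\<mu> - \<omega>)) = wp \<Lambda> z"
    using \<open>z \<notin> \<Lambda>\<close> summable_on_reindex_bij_betw[OF bij, where f = "wp_summand z"]
      infsum_reindex_bij_betw[OF bij, where f = "wp_summand z"]
    by (simp_all add: wp_summand_summable_on_lattice wp_eq_infsum_lattice)
  have split: "wp_summand (z + \<omega>) \<mu> = wp_summand z (\<mu> - \<omega>) + wp_summand \<omega> \<mu>" for \<mu>
    unfolding wp_summand_def by (simp add: algebra_simps power2_commute)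
  have "(\<lambda>\<mu>. wp_summand (z + \<omega>) \<mu> + - wp_summand z (\<mu> - \<omega>)) summable_on \<Lambda>"
    using \<open>z + \<omega> \<notin> \<Lambda>\<close> shifted(1)
    by (intro summable_on_add wp_summand_summable_on_lattice) (simp_all add: summable_on_uminus)
  then have "wp_summand \<omega> summable_on \<Lambda>"
    unfolding split by simp
  then show "wp \<Lambda> (z + \<omega>) = wp \<Lambda> z + (\<Sum>\<^sub>\<infinity>\<mu>\<in>\<Lambda>. wp_summand \<omega> \<mu>)"
    using \<open>z + \<omega> \<notin> \<Lambda>\<close> shifted
    by (simp add: wp_eq_infsum_lattice split infsum_add)
qed

lemma wp_periodic_if_half_notin:
  assumes "\<omega> \<in> \<Lambda>" "\<omega> / 2 \<notin> \<Lambda>" "z \<notin> \<Lambda>"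
  shows "wp \<Lambda> (z + \<omega>) = wp \<Lambda> z"
proof -
  obtain K where K: "\<And>z. z \<notin> \<Lambda> \<Longrightarrow> wp \<Lambda> (z + \<omega>) = wp \<Lambda> z + K"
    using wp_shift_lattice[OF assms(1)] by blast
  \<comment> \<open>evaluate at the half period \<open>- \<omega> / 2\<close>, where evenness forces \<open>K = 0\<close>\<close>
  have "wp \<Lambda> (\<omega> / 2) = wp \<Lambda> (- (\<omega> / 2)) + K"
    using K[of "- (\<omega> / 2)"] assms(2) by simp
  then have "K = 0" by (simp add: wp_minus)
  then show ?thesis using K[OF assms(3)] by simp
qed

lemma wp_periodic:
  assumes "\<omega> \<in> \<Lambda>" "z \<notin> \<Lambda>"
  shows "wp \<Lambda> (z + \<omega>) = wp \<Lambda> z"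
proof (cases "\<omega> / 2 \<in> \<Lambda>")
  case False
  then show ?thesis using wp_periodic_if_half_notin assms by blast
next
  case True
  have "(\<omega> + w1) / 2 \<notin> \<Lambda>"
    using lattice_diff[of "(\<omega> + w1) / 2" "\<omega> / 2"] True half_w1_notin_lattice by (auto simp: field_simps)
  moreover have "z + \<omega> \<notin> \<Lambda>"
    using assms lattice_add_iff by blast
  ultimately have "wp \<Lambda> (z + \<omega>) = wp \<Lambda> (z + (\<omega> + w1))"
    using wp_periodic_if_half_notin[OF lattice_w1 half_w1_notin_lattice, of "z + \<omega>"]
    by (simp add: add.assoc)
  also have "\<dots> = wp \<Lambda> z"
    using assms \<open>(\<omega> + w1) / 2 \<notin> \<Lambda>\<close> by (intro wp_periodic_if_half_notin) auto
  finally show ?thesis .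
qed

section \<open>Even elliptic functions\<close>

lemma lattice_translate_into_parallelogram:
  "\<exists>\<omega>\<in>\<Lambda>. z - \<omega> \<in> (\<lambda>(s, t). of_real s * w1 + of_real t * w2) ` ({0..1} \<times> {0..1})"
proof -
  define t where "t = w2 / w1"
  define b where "b = Im (z / w1) / Im t"
  define a where "a = Re (z / w1) - b * Re t"
  have "Im t \<noteq> 0"
    using basis_independent by (simp add: t_def)
  then have "of_real a + of_real b * t = z / w1"
    by (simp add: complex_eq_iff a_def b_def)
  then have z: "z = of_real a * w1 + of_real b * w2"
    using w1_nonzero by (simp add: t_def field_simps)
  have "z - (of_int \<lfloor>a\<rfloor> * w1 + of_int \<lfloor>b\<rfloor> * w2)
      = of_real (a - of_int \<lfloor>a\<rfloor>) * w1 + of_real (b - of_int \<lfloor>b\<rfloor>) * w2"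
    unfolding z by (simp add: algebra_simps)
  moreover have "(a - of_int \<lfloor>a\<rfloor>, b - of_int \<lfloor>b\<rfloor>) \<in> {0..1} \<times> {0..1}"
    by auto linarith+
  moreover have "of_int \<lfloor>a\<rfloor> * w1 + of_int \<lfloor>b\<rfloor> * w2 \<in> \<Lambda>"
    unfolding in_lattice_iff by blast
  ultimately show ?thesis
    by (intro bexI[of _ "of_int \<lfloor>a\<rfloor> * w1 + of_int \<lfloor>b\<rfloor> * w2"] image_eqI[of _ _ "(a - of_int \<lfloor>a\<rfloor>, b - of_int \<lfloor>b\<rfloor>)"]) simp_all
qed

lemma periodic_entire_constant:
  assumes "F holomorphic_on UNIV" "\<And>z \<omega>. \<omega> \<in> \<Lambda> \<Longrightarrow> F (z + \<omega>) = F z"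
  obtains c where "\<And>z. F z = c"
proof -
  define P where "P = (\<lambda>(s, t). of_real s * w1 + of_real t * w2) ` ({0..1::real} \<times> {0..1::real})"
  have "compact P"
    unfolding P_def case_prod_unfold
    by (intro compact_continuous_image compact_Times compact_Icc continuous_intros)
  then have "compact (F ` P)"
    using assms(1) by (intro compact_continuous_image holomorphic_on_imp_continuous_on)
      (auto intro: holomorphic_on_subset)
  moreover have "F z \<in> F ` P" for z
  proof -
    obtain \<omega> where "\<omega> \<in> \<Lambda>" "z - \<omega> \<in> P"
      using lattice_translate_into_parallelogram unfolding P_def by blast
    then show ?thesis using assms(2)[of \<omega> "z - \<omega>"] by force
  qed
  ultimately have "bounded (range F)"
    by (meson bounded_subset compact_imp_bounded image_subsetI)
  then have "F constant_on UNIV"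
    by (rule Liouville_theorem[OF assms(1)])
  then show ?thesis
    using that unfolding constant_on_def by blast
qed

lemma periodic_tendsto_lattice_point:
  assumes "\<And>z \<omega>. z \<notin> \<Lambda> \<Longrightarrow> \<omega> \<in> \<Lambda> \<Longrightarrow> f (z + \<omega>) = f z" "f \<midarrow>0\<rightarrow> c" "\<omega> \<in> \<Lambda>"
  shows "f \<midarrow>\<omega>\<rightarrow> c"
proof -
  have "(\<lambda>z. f (z + - \<omega>)) \<midarrow>0 - - \<omega>\<rightarrow> c"
    using assms(2) by (rule LIM_offset)
  moreover have "eventually (\<lambda>z. f (z + - \<omega>) = f z) (at \<omega>)"
    using eventually_not_in_lattice[of \<omega>]
    by eventually_elim (metis assms(1,3) diff_add_cancel lattice_diff_iff lattice_uminus_iff uminus_add_conv_diff)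
  ultimately show ?thesis
    by (simp add: tendsto_cong)
qed

lemma elliptic_without_poles_constant:
  assumes "f holomorphic_on - \<Lambda>" "\<And>z \<omega>. z \<notin> \<Lambda> \<Longrightarrow> \<omega> \<in> \<Lambda> \<Longrightarrow> f (z + \<omega>) = f z"
    and "pole_order_at_0_le 0 f"
  obtains c where "\<And>z. z \<notin> \<Lambda> \<Longrightarrow> f z = c"
proof -
  obtain c where "f \<midarrow>0\<rightarrow> c"
    using pole_order_at_0_le_0_tendsto[OF assms(3)] by blast
  have analytic: "f analytic_on - \<Lambda>"
    using assms(1) open_lattice_complement by (simp add: analytic_on_open)
  have "remove_sings f analytic_on UNIV - \<Lambda> \<union> \<Lambda>"
  proof (rule remove_sings_analytic_on_removable)
    show "f analytic_on UNIV - \<Lambda> \<union> \<Lambda> - \<Lambda>"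
      using analytic by (simp add: Compl_eq_Diff_UNIV)
    show "isolated_singularity_at f \<omega> \<and> (\<exists>c. f \<midarrow>\<omega>\<rightarrow> c)" if "\<omega> \<in> (UNIV - \<Lambda> \<union> \<Lambda>) \<inter> \<Lambda>" for \<omega>
      using that isolated_singularity_at_lattice[OF assms(1)]
        periodic_tendsto_lattice_point[OF assms(2) \<open>f \<midarrow>0\<rightarrow> c\<close>] by blast
  qed
  then have "remove_sings f holomorphic_on UNIV"
    by (simp add: analytic_imp_holomorphic)
  moreover have "remove_sings f (z + \<omega>) = remove_sings f z" if "\<omega> \<in> \<Lambda>" for z \<omega>
    using filtermap_at_shift[of "- \<omega>" z] eventually_not_in_lattice[of z]
    by (intro remove_sings_eq_compose) (auto elim!: eventually_mono simp: assms(2) that)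
  ultimately obtain c' where "\<And>z. remove_sings f z = c'"
    using periodic_entire_constant by blast
  moreover have "remove_sings f z = f z" if "z \<notin> \<Lambda>" for z
    using that by (intro remove_sings_at_analytic analytic_on_subset[OF analytic]) auto
  ultimately show ?thesis using that by metis
qed

lemma pole_order_at_0_le_poly_wp:
  assumes "degree P \<le> m"
  shows "pole_order_at_0_le (2 * m) (\<lambda>z. poly P (wp \<Lambda> z))"
proof -
  obtain d where d: "d > 0" "ball 0 d \<inter> \<Lambda> = {0}"
    using ball_inter_lattice by blast
  have "(\<Sum>i\<le>m. coeff P i * z^(2 * (m - i)) * (1 + z^2 * wp_tail z)^i) = z^(2 * m) * poly P (wp \<Lambda> z)"
    if "z \<noteq> 0" for z
  proof -
    have "z^(2 * m) * wp \<Lambda> z ^ i = z^(2 * (m - i)) * (1 + z^2 * wp_tail z)^i" if "i \<le> m" for i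
    proof -
      obtain j where "m = i + j"
        using \<open>i \<le> m\<close> le_iff_add by blast
      then have "z^(2 * m) = z^(2 * (m - i)) * z^(2 * i)"
        by (simp add: power_add distrib_left)
      also have "z^(2 * i) = (z^2)^i"
        by (rule power_mult)
      finally have "z^(2 * m) * wp \<Lambda> z ^ i = z^(2 * (m - i)) * (z^2 * wp \<Lambda> z)^i"
        by (simp add: power_mult_distrib)
      also have "z^2 * wp \<Lambda> z = 1 + z^2 * wp_tail z"
        by (rule square_mult_wp[OF \<open>z \<noteq> 0\<close>])
      finally show ?thesis .
    qed
    then show ?thesis
      unfolding poly_altdef_le[OF assms] sum_distrib_left by (intro sum.cong) (simp_all add: mult_ac)
  qed
  then show ?thesis
    using d
    by (intro pole_order_at_0_leI[of d "\<lambda>z. \<Sum>i\<le>m. coeff P i * z^(2 * (m - i)) * (1 + z^2 * wp_tail z)^i"]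
        holomorphic_intros holomorphic_wp_tail_ball) auto
qed

definition even_elliptic :: "(complex \<Rightarrow> complex) \<Rightarrow> bool" where
  "even_elliptic f \<longleftrightarrow> f holomorphic_on - \<Lambda> \<and>
     (\<forall>z \<omega>. z \<notin> \<Lambda> \<longrightarrow> \<omega> \<in> \<Lambda> \<longrightarrow> f (z + \<omega>) = f z) \<and> (\<forall>z. z \<notin> \<Lambda> \<longrightarrow> f (- z) = f z)"

lemma even_elliptic_diff_wp_power:
  assumes "even_elliptic f"
  shows "even_elliptic (\<lambda>z. f z - c * wp \<Lambda> z ^ n)"
  using assms unfolding even_elliptic_def
  by (auto intro!: holomorphic_intros holomorphic_wp simp: wp_periodic wp_minus)

lemma even_elliptic_reduce_pole:
  assumes "even_elliptic f" "pole_order_at_0_le (2 * Suc n) f"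
  obtains c where "pole_order_at_0_le (2 * n) (\<lambda>z. f z - c * wp \<Lambda> z ^ Suc n)"
proof -
  obtain d where d: "d > 0" "ball 0 d \<inter> \<Lambda> = {0}"
    using ball_inter_lattice by blast
  obtain r g where r: "r > 0" "r \<le> d" and g: "g holomorphic_on ball 0 r"
    and g_eq: "\<And>z. z \<in> ball 0 r - {0} \<Longrightarrow> g z = z^(2 * Suc n) * f z"
    using pole_order_at_0_leE[OF assms(2) d(1)] by blast
  have not_lattice: "z \<notin> \<Lambda>" if "z \<in> ball 0 r - {0}" for z
    using that r(2) by (intro notin_lattice_if_in_ball[OF d(2)]) auto
  have g_even: "g (- z) = g z" if "z \<in> ball 0 r" for z
    using that g_eq[of z] g_eq[of "- z"] not_lattice[of z] assms(1)
    by (cases "z = 0") (auto simp: even_elliptic_def)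
  \<comment> \<open>\<open>h\<close> is the holomorphic extension of \<open>z\<^sup>2\<^sup>n\<^sup>+\<^sup>2 \<wp>(z)\<^sup>n\<^sup>+\<^sup>1\<close> to \<open>0\<close>, where it takes the value \<open>1\<close>\<close>
  define h where "h z = (1 + z^2 * wp_tail z) ^ Suc n" for z
  have h_eq: "h z = z^(2 * Suc n) * wp \<Lambda> z ^ Suc n" if "z \<noteq> 0" for z
    unfolding h_def square_mult_wp[OF that, symmetric] by (simp add: power_mult_distrib power_mult power2_eq_square)
  have "wp_tail holomorphic_on ball 0 r"
    using holomorphic_wp_tail_ball[OF d(2)] by (rule holomorphic_on_subset) (use r(2) in auto)
  then have "(\<lambda>z. g z - g 0 * h z) holomorphic_on ball 0 r"
    unfolding h_def by (intro holomorphic_intros g)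
  moreover have "g (- z) - g 0 * h (- z) = g z - g 0 * h z" if "z \<in> ball 0 r" for z
    using g_even[OF that] by (simp add: h_def wp_tail_minus)
  moreover have "g z - g 0 * h z = z^(Suc (Suc (2 * n))) * (f z - g 0 * wp \<Lambda> z ^ Suc n)"
    if "z \<in> ball 0 r - {0}" for z
    using g_eq[OF that] h_eq[of z] that by (simp add: algebra_simps)
  ultimately have "pole_order_at_0_le (2 * n) (\<lambda>z. f z - g 0 * wp \<Lambda> z ^ Suc n)"
    using r(1) by (intro pole_order_at_0_le_if_even_vanishing[of r "\<lambda>z. g z - g 0 * h z"]) (simp_all add: h_def)
  then show ?thesis by (rule that)
qed

lemma even_elliptic_eq_poly_wp:
  assumes "even_elliptic f" "pole_order_at_0_le (2 * n) f"
  shows "\<exists>P. \<forall>z. z \<notin> \<Lambda> \<longrightarrow> f z = poly P (wp \<Lambda> z)"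
  using assms
proof (induction n arbitrary: f)
  case 0
  have "f holomorphic_on - \<Lambda>" "\<And>z \<omega>. z \<notin> \<Lambda> \<Longrightarrow> \<omega> \<in> \<Lambda> \<Longrightarrow> f (z + \<omega>) = f z"
    "pole_order_at_0_le 0 f"
    using "0.prems" unfolding even_elliptic_def by auto
  then obtain c where "\<And>z. z \<notin> \<Lambda> \<Longrightarrow> f z = c"
    using elliptic_without_poles_constant by metis
  then show ?case by (intro exI[of _ "[:c:]"]) simp
next
  case (Suc n)
  obtain c where "pole_order_at_0_le (2 * n) (\<lambda>z. f z - c * wp \<Lambda> z ^ Suc n)"
    using even_elliptic_reduce_pole[OF Suc.prems] by blast
  then obtain P where "\<forall>z. z \<notin> \<Lambda> \<longrightarrow> f z - c * wp \<Lambda> z ^ Suc n = poly P (wp \<Lambda> z)"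
    using Suc.IH even_elliptic_diff_wp_power[OF Suc.prems(1)] by blast
  then show ?case
    by (intro exI[of _ "P + monom c (Suc n)"]) (simp add: poly_monom algebra_simps)
qed

end

section \<open>Sublattices\<close>

locale sublattice = L: complex_lattice w1 w2 + L': complex_lattice v1 v2 for w1 w2 v1 v2 +
  assumes sublattice: "L'.\<Lambda> \<subseteq> L.\<Lambda>"
begin

lemma sublattice_index:
  obtains D :: int where "D > 0" "\<And>\<omega>. \<omega> \<in> L.\<Lambda> \<Longrightarrow> of_int D * \<omega> \<in> L'.\<Lambda>"
proof -
  have "v1 \<in> L.\<Lambda>" "v2 \<in> L.\<Lambda>"
    using sublattice by auto
  then obtain a b c d :: int where ab: "v1 = of_int a * w1 + of_int b * w2"
    and cd: "v2 = of_int c * w1 + of_int d * w2"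
    unfolding L.in_lattice_iff by blast
  define D where "D = a * d - b * c"
  have w1: "of_int D * w1 = of_int d * v1 - of_int b * v2"
    and w2: "of_int D * w2 = of_int a * v2 - of_int c * v1"
    unfolding ab cd D_def by (simp_all add: algebra_simps)
  have "D \<noteq> 0"
  proof
    assume "D = 0"
    then have "of_real (of_int d) * v1 + of_real (- of_int b) * v2 = 0"
      "of_real (- of_int c) * v1 + of_real (of_int a) * v2 = 0"
      using w1 w2 by (simp_all add: algebra_simps)
    then have "- real_of_int b = 0" "real_of_int a = 0"
      using L'.basis_real_independent by blast+
    then have "a = 0" "b = 0" by simp_all
    then show False using ab L'.w1_nonzero by simp
  qed
  have "of_int D * \<omega> \<in> L'.\<Lambda>" if \<omega>: "\<omega> \<in> L.\<Lambda>" for \<omega>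
  proof -
    obtain m n :: int where "\<omega> = of_int m * w1 + of_int n * w2"
      using \<omega> unfolding L.in_lattice_iff by blast
    then have "of_int D * \<omega> = of_int m * (of_int D * w1) + of_int n * (of_int D * w2)"
      by (simp add: algebra_simps)
    then show ?thesis unfolding w1 w2
      by (simp only: L'.lattice_add L'.lattice_diff L'.lattice_int_mult L'.lattice_w1 L'.lattice_w2)
  qed
  then show ?thesis
    using that[of "\<bar>D\<bar>"] \<open>D \<noteq> 0\<close> by (simp add: abs_if)
qed

lemma finite_coset_representatives:
  obtains R where "finite R" "\<And>\<omega>. \<omega> \<in> L.\<Lambda> \<Longrightarrow> \<exists>\<rho>\<in>R. \<omega> - \<rho> \<in> L'.\<Lambda>"
proof -
  obtain D :: int where D: "D > 0" "\<And>\<omega>. \<omega> \<in> L.\<Lambda> \<Longrightarrow> of_int D * \<omega> \<in> L'.\<Lambda>"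
    using sublattice_index by blast
  define R where "R = L.lattice_point ` ({0..<D} \<times> {0..<D})"
  have "\<exists>\<rho>\<in>R. \<omega> - \<rho> \<in> L'.\<Lambda>" if \<omega>: "\<omega> \<in> L.\<Lambda>" for \<omega>
  proof -
    obtain m n :: int where mn: "\<omega> = of_int m * w1 + of_int n * w2"
      using \<omega> unfolding L.in_lattice_iff by blast
    have "L.lattice_point (m mod D, n mod D) \<in> R"
      unfolding R_def using D(1) by (intro imageI) simp
    moreover have "\<omega> - L.lattice_point (m mod D, n mod D)
        = of_int (m div D) * (of_int D * w1) + of_int (n div D) * (of_int D * w2)"
    proof -
      have "\<omega> - L.lattice_point (m mod D, n mod D) = of_int (m - m mod D) * w1 + of_int (n - n mod D) * w2"
        unfolding mn L.lattice_point_def by (simp add: algebra_simps)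
      then show ?thesis
        by (simp add: minus_mod_eq_mult_div algebra_simps)
    qed
    moreover have "\<dots> \<in> L'.\<Lambda>"
      using D(2)[OF L.lattice_w1] D(2)[OF L.lattice_w2] by auto
    ultimately show ?thesis by metis
  qed
  moreover have "finite R"
    unfolding R_def by simp
  ultimately show ?thesis
    using that by blast
qed

lemma finite_wp_values: "finite (wp L'.\<Lambda> ` (L.\<Lambda> - L'.\<Lambda>))"
proof -
  obtain R where R: "finite R" "\<And>\<omega>. \<omega> \<in> L.\<Lambda> \<Longrightarrow> \<exists>\<rho>\<in>R. \<omega> - \<rho> \<in> L'.\<Lambda>"
    using finite_coset_representatives by metis
  have "wp L'.\<Lambda> ` (L.\<Lambda> - L'.\<Lambda>) \<subseteq> wp L'.\<Lambda> ` (R - L'.\<Lambda>)"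
  proof
    fix v assume "v \<in> wp L'.\<Lambda> ` (L.\<Lambda> - L'.\<Lambda>)"
    then obtain \<omega> where \<omega>: "\<omega> \<in> L.\<Lambda>" "\<omega> \<notin> L'.\<Lambda>" "v = wp L'.\<Lambda> \<omega>" by blast
    then obtain \<rho> where \<rho>: "\<rho> \<in> R" "\<omega> - \<rho> \<in> L'.\<Lambda>" using R(2) by blast
    have "\<rho> \<notin> L'.\<Lambda>"
    proof
      assume "\<rho> \<in> L'.\<Lambda>"
      with \<rho>(2) have "(\<omega> - \<rho>) + \<rho> \<in> L'.\<Lambda>" by (rule L'.lattice_add)
      with \<omega>(2) show False by simp
    qed
    moreover have "wp L'.\<Lambda> \<omega> = wp L'.\<Lambda> \<rho>"
      using L'.wp_periodic[OF \<rho>(2) \<open>\<rho> \<notin> L'.\<Lambda>\<close>] by simp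
    ultimately show "v \<in> wp L'.\<Lambda> ` (R - L'.\<Lambda>)"
      using \<rho>(1) \<omega>(3) by blast
  qed
  then show ?thesis
    using R(1) finite_subset by blast
qed

text \<open>The double zeros of \<open>cancelling_poly\<close> at the values of \<open>\<wp>\<^sub>\<Lambda>\<^sub>'\<close> on \<open>\<Lambda> - \<Lambda>'\<close>
  cancel the double poles of \<open>\<wp>\<^sub>\<Lambda>\<close> there.\<close>

definition cancelling_poly :: "complex poly" where
  "cancelling_poly = (\<Prod>v\<in>wp L'.\<Lambda> ` (L.\<Lambda> - L'.\<Lambda>). [:- v, 1:]^2)"

definition cleared_wp :: "complex \<Rightarrow> complex" where
  "cleared_wp z = poly cancelling_poly (wp L'.\<Lambda> z) * wp L.\<Lambda> z"

lemma cancelling_poly_nonzero: "cancelling_poly \<noteq> 0"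
  unfolding cancelling_poly_def using finite_wp_values by simp

lemma holomorphic_sublattice_wp: "wp L'.\<Lambda> holomorphic_on - L.\<Lambda>"
  using L'.holomorphic_wp by (rule holomorphic_on_subset) (use sublattice in auto)

lemma holomorphic_cleared_wp: "cleared_wp holomorphic_on - L.\<Lambda>"
  unfolding cleared_wp_def[abs_def]
  by (intro holomorphic_intros L.holomorphic_wp holomorphic_sublattice_wp)

lemma cleared_wp_periodic:
  assumes "z \<notin> L.\<Lambda>" "\<omega> \<in> L'.\<Lambda>"
  shows "cleared_wp (z + \<omega>) = cleared_wp z"
proof -
  have "\<omega> \<in> L.\<Lambda>" "z \<notin> L'.\<Lambda>"
    using assms sublattice by auto
  with assms show ?thesis
    by (simp add: cleared_wp_def L.wp_periodic L'.wp_periodic)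
qed

lemma cleared_wp_minus: "cleared_wp (- z) = cleared_wp z"
  by (simp add: cleared_wp_def L.wp_minus L'.wp_minus)

lemma cleared_wp_tendsto:
  assumes "\<omega> \<in> L.\<Lambda>" "\<omega> \<notin> L'.\<Lambda>"
  shows "\<exists>c. cleared_wp \<midarrow>\<omega>\<rightarrow> c"
proof -
  define v where "v = wp L'.\<Lambda> \<omega>"
  have "v \<in> wp L'.\<Lambda> ` (L.\<Lambda> - L'.\<Lambda>)"
    unfolding v_def using assms by blast
  then obtain B where B: "cancelling_poly = [:- v, 1:]^2 * B"
    unfolding cancelling_poly_def using prod.remove[OF finite_wp_values] by blast
  obtain k where "isCont k \<omega>" and k: "\<And>z. wp L'.\<Lambda> z - v = (z - \<omega>) * k z"
    using holomorphic_difference_quotient[OF L'.holomorphic_wp L'.open_lattice_complement] assms(2)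
    unfolding v_def by blast
  define H where "H z = k z ^ 2 * poly B (wp L'.\<Lambda> z) * (1 + (z - \<omega>)^2 * L.wp_tail (z - \<omega>))" for z
  have "isCont (\<lambda>z. L.wp_tail (z - \<omega>)) \<omega>"
    using isCont_o2[where f = "\<lambda>z. z - \<omega>" and a = \<omega> and g = L.wp_tail] L.continuous_wp_tail[of 0]
    by (simp add: continuous_intros)
  then have "isCont H \<omega>"
    unfolding H_def using \<open>isCont k \<omega>\<close> L'.continuous_wp[OF assms(2)]
    by (intro continuous_intros) auto
  moreover have "eventually (\<lambda>z. cleared_wp z = H z) (at \<omega>)"
    using L.eventually_not_in_lattice[of \<omega>] eventually_at_in_open[OF open_UNIV UNIV_I, of \<omega>]
  proof eventually_elim
    case (elim z)
    then have "z \<noteq> \<omega>" "z - \<omega> \<notin> L.\<Lambda>"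
      using assms(1) L.lattice_diff_iff by auto
    have "poly cancelling_poly (wp L'.\<Lambda> z) = ((z - \<omega>) * k z)^2 * poly B (wp L'.\<Lambda> z)"
      unfolding B by (simp add: k[symmetric])
    moreover have "(z - \<omega>)^2 * wp L.\<Lambda> z = 1 + (z - \<omega>)^2 * L.wp_tail (z - \<omega>)"
      using L.wp_periodic[OF assms(1) \<open>z - \<omega> \<notin> L.\<Lambda>\<close>] L.square_mult_wp[of "z - \<omega>"] \<open>z \<noteq> \<omega>\<close>
      by simp
    ultimately show ?case
      unfolding cleared_wp_def H_def by (simp add: power_mult_distrib mult_ac)
  qed
  ultimately have "cleared_wp \<midarrow>\<omega>\<rightarrow> H \<omega>"
    by (simp add: isCont_def tendsto_cong)
  then show ?thesis ..
qed

lemma even_elliptic_remove_sings_cleared_wp: "L'.even_elliptic (remove_sings cleared_wp)"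
proof -
  have "remove_sings cleared_wp analytic_on - L'.\<Lambda>"
  proof (rule remove_sings_analytic_on_removable)
    show "cleared_wp analytic_on - L'.\<Lambda> - L.\<Lambda>"
      using holomorphic_cleared_wp L.open_lattice_complement
      by (simp add: Diff_eq analytic_on_open[symmetric] analytic_on_subset)
    show "isolated_singularity_at cleared_wp \<omega> \<and> (\<exists>c. cleared_wp \<midarrow>\<omega>\<rightarrow> c)"
      if "\<omega> \<in> - L'.\<Lambda> \<inter> L.\<Lambda>" for \<omega>
      using that L.isolated_singularity_at_lattice[OF holomorphic_cleared_wp] cleared_wp_tendsto by blast
  qed
  moreover have "remove_sings cleared_wp (z + \<omega>) = remove_sings cleared_wp z" if "\<omega> \<in> L'.\<Lambda>" for z \<omega>
    using filtermap_at_shift[of "- \<omega>" z] L.eventually_not_in_lattice[of z]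
    by (intro remove_sings_eq_compose) (auto elim!: eventually_mono simp: cleared_wp_periodic that)
  moreover have "remove_sings cleared_wp (- z) = remove_sings cleared_wp z" for z
    by (intro remove_sings_eq_compose[where g = uminus] filtermap_at_minus) (simp add: cleared_wp_minus)
  ultimately show ?thesis
    unfolding L'.even_elliptic_def by (simp add: analytic_imp_holomorphic)
qed

lemma remove_sings_cleared_wp_eq: "z \<notin> L.\<Lambda> \<Longrightarrow> remove_sings cleared_wp z = cleared_wp z"
  using holomorphic_cleared_wp L.open_lattice_complement
  by (intro remove_sings_at_analytic) (auto simp: analytic_on_open[symmetric] intro: analytic_on_subset)

lemma pole_order_remove_sings_cleared_wp:
  "pole_order_at_0_le (2 * Suc (degree cancelling_poly)) (remove_sings cleared_wp)"
proof -
  obtain d where "d > 0" and d: "ball 0 d \<inter> L.\<Lambda> = {0}"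
    using L.ball_inter_lattice by blast
  have "pole_order_at_0_le (2 * degree cancelling_poly + 2 * 1)
      (\<lambda>z. poly cancelling_poly (wp L'.\<Lambda> z) * poly [:0, 1:] (wp L.\<Lambda> z))"
    by (intro pole_order_at_0_le_mult L'.pole_order_at_0_le_poly_wp L.pole_order_at_0_le_poly_wp) simp_all
  then have "pole_order_at_0_le (2 * Suc (degree cancelling_poly)) cleared_wp"
    by (simp add: cleared_wp_def[abs_def])
  moreover note \<open>d > 0\<close>
  moreover have "cleared_wp z = remove_sings cleared_wp z" if "z \<in> ball 0 d - {0}" for z
    using that L.notin_lattice_if_in_ball[OF d, of z] by (simp add: remove_sings_cleared_wp_eq)
  ultimately show ?thesis
    by (rule pole_order_at_0_le_cong)
qed

lemma poly_wp_nonzero_somewhere: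
  assumes "P \<noteq> 0"
  obtains z where "z \<notin> L.\<Lambda>" "poly P (wp L'.\<Lambda> z) \<noteq> 0"
proof -
  obtain M where M: "\<And>u. poly P u = 0 \<Longrightarrow> norm u \<le> M"
    using finite_imp_bounded[OF poly_roots_finite[OF assms]] unfolding bounded_iff by blast
  have "eventually (\<lambda>z. max M 0 + 1 \<le> norm (wp L'.\<Lambda> z)) (at 0)"
    using L'.filterlim_wp_at_0 unfolding filterlim_at_infinity[OF order_refl] by simp
  then have "eventually (\<lambda>z. z \<notin> L.\<Lambda> \<and> poly P (wp L'.\<Lambda> z) \<noteq> 0) (at 0)"
    using L.eventually_not_in_lattice[of 0] by eventually_elim (use M in force)
  then show ?thesis
    using that eventually_happens'[OF at_neq_bot] by blast
qed

lemma polynomial_relation_cancel_root: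
  assumes "\<And>z. z \<notin> L.\<Lambda> \<Longrightarrow>
      poly ([:- u, 1:] * B) (wp L'.\<Lambda> z) * wp L.\<Lambda> z = poly ([:- u, 1:] * A) (wp L'.\<Lambda> z)"
    and "z \<notin> L.\<Lambda>"
  shows "poly B (wp L'.\<Lambda> z) * wp L.\<Lambda> z = poly A (wp L'.\<Lambda> z)"
proof -
  obtain w where "w \<notin> L.\<Lambda>" "poly [:- u, 1:] (wp L'.\<Lambda> w) \<noteq> 0"
    using poly_wp_nonzero_somewhere[of "[:- u, 1:]"] by auto
  \<comment> \<open>the factor \<open>\<wp>\<^sub>\<Lambda>\<^sub>' - u\<close> is not identically zero on the connected set \<open>- \<Lambda>\<close>\<close>
  have "poly B (wp L'.\<Lambda> z) * wp L.\<Lambda> z - poly A (wp L'.\<Lambda> z) = 0"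
  proof (rule holomorphic_mult_eq_0_cancel[where S = "- L.\<Lambda>"
        and f = "\<lambda>z. poly B (wp L'.\<Lambda> z) * wp L.\<Lambda> z - poly A (wp L'.\<Lambda> z)"
        and g = "\<lambda>z. poly [:- u, 1:] (wp L'.\<Lambda> z)"])
    show "(\<lambda>z. poly B (wp L'.\<Lambda> z) * wp L.\<Lambda> z - poly A (wp L'.\<Lambda> z)) holomorphic_on - L.\<Lambda>"
      "(\<lambda>z. poly [:- u, 1:] (wp L'.\<Lambda> z)) holomorphic_on - L.\<Lambda>"
      by (intro holomorphic_intros L.holomorphic_wp holomorphic_sublattice_wp)+
    show "poly [:- u, 1:] (wp L'.\<Lambda> y) * (poly B (wp L'.\<Lambda> y) * wp L.\<Lambda> y - poly A (wp L'.\<Lambda> y)) = 0"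
      if "y \<in> - L.\<Lambda>" for y
      using assms(1)[of y] that by (simp add: algebra_simps)
  qed (use \<open>w \<notin> L.\<Lambda>\<close> \<open>poly [:- u, 1:] (wp L'.\<Lambda> w) \<noteq> 0\<close> assms(2)
         L.open_lattice_complement L.connected_lattice_complement in auto)
  then show ?thesis by simp
qed

lemma wp_rational_if_polynomial_relation:
  assumes "B \<noteq> 0" "\<And>z. z \<notin> L.\<Lambda> \<Longrightarrow> poly B (wp L'.\<Lambda> z) * wp L.\<Lambda> z = poly A (wp L'.\<Lambda> z)"
  shows "\<exists>A1 B1. \<forall>z. z \<notin> L.\<Lambda> \<longrightarrow>
    poly B1 (wp L'.\<Lambda> z) \<noteq> 0 \<and> wp L.\<Lambda> z = poly A1 (wp L'.\<Lambda> z) / poly B1 (wp L'.\<Lambda> z)"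
  using assms
proof (induction "degree B" arbitrary: A B rule: less_induct)
  case less
  show ?case
  proof (cases "\<exists>u. poly B u = 0 \<and> poly A u = 0")
    case True
    then obtain u B' A' where B: "B = [:- u, 1:] * B'" and A: "A = [:- u, 1:] * A'"
      by (auto simp: poly_eq_0_iff_dvd elim!: dvdE)
    with less.prems(1) have "B' \<noteq> 0"
      by auto
    have "degree B = degree [:- u, 1:] + degree B'"
      unfolding B by (rule degree_mult_eq) (simp_all add: \<open>B' \<noteq> 0\<close>)
    then have "degree B' < degree B"
      by simp
    moreover have "poly B' (wp L'.\<Lambda> z) * wp L.\<Lambda> z = poly A' (wp L'.\<Lambda> z)" if "z \<notin> L.\<Lambda>" for z
      using less.prems(2) that unfolding A B by (rule polynomial_relation_cancel_root)
    ultimately show ?thesis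
      using less.hyps \<open>B' \<noteq> 0\<close> by blast
  next
    case False
    then have "poly B (wp L'.\<Lambda> z) \<noteq> 0" if "z \<notin> L.\<Lambda>" for z
      using less.prems(2)[OF that] by force
    then show ?thesis
      using less.prems(2) by (intro exI[of _ A] exI[of _ B]) (auto simp: field_simps)
  qed
qed

lemma wp_rational_in_sublattice_wp:
  obtains A B where "\<And>z. z \<notin> L.\<Lambda> \<Longrightarrow>
    poly B (wp L'.\<Lambda> z) \<noteq> 0 \<and> wp L.\<Lambda> z = poly A (wp L'.\<Lambda> z) / poly B (wp L'.\<Lambda> z)"
proof -
  obtain A where A: "\<And>z. z \<notin> L'.\<Lambda> \<Longrightarrow> remove_sings cleared_wp z = poly A (wp L'.\<Lambda> z)"
    using L'.even_elliptic_eq_poly_wp[OF even_elliptic_remove_sings_cleared_wp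
        pole_order_remove_sings_cleared_wp] by blast
  have "poly cancelling_poly (wp L'.\<Lambda> z) * wp L.\<Lambda> z = poly A (wp L'.\<Lambda> z)" if "z \<notin> L.\<Lambda>" for z
    using that sublattice A[of z] remove_sings_cleared_wp_eq[of z] by (auto simp: cleared_wp_def)
  then show ?thesis
    using wp_rational_if_polynomial_relation[OF cancelling_poly_nonzero] that by metis
qed

end

section \<open>Elimination for bivariate polynomials\<close>

lemma homogeneous_system_nontrivial_solution:
  fixes v :: "'i \<Rightarrow> 'j \<Rightarrow> real"
  assumes "finite J" "finite I" "card J < card I"
  shows "\<exists>c. (\<exists>i\<in>I. c i \<noteq> 0) \<and> (\<forall>j\<in>J. (\<Sum>i\<in>I. c i * v i j) = 0)"
  using assms
proof (induction J arbitrary: I v rule: finite_induct)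
  case empty
  then obtain i0 where "i0 \<in> I" by fastforce
  then show ?case by (intro exI[of _ "\<lambda>i. if i = i0 then 1 else 0"]) auto
next
  case (insert j0 J)
  show ?case
  proof (cases "\<forall>i\<in>I. v i j0 = 0")
    case True
    then show ?thesis
      using insert.IH[of I v] insert.prems insert.hyps by auto
  next
    case False
    then obtain i0 where i0: "i0 \<in> I" "v i0 j0 \<noteq> 0" by blast
    \<comment> \<open>Gaussian elimination of the unknown \<open>c i0\<close> using the equation \<open>j0\<close>\<close>
    define w where "w i j = v i j - v i j0 / v i0 j0 * v i0 j" for i j
    have "finite (I - {i0})" "card J < card (I - {i0})"
      using insert.prems insert.hyps i0(1) by simp_all
    then obtain c where c: "\<exists>i\<in>I - {i0}. c i \<noteq> 0" "\<forall>j\<in>J. (\<Sum>i\<in>I - {i0}. c i * w i j) = 0"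
      using insert.IH by blast
    define c' where "c' i = (if i = i0 then - (\<Sum>k\<in>I - {i0}. c k * v k j0) / v i0 j0 else c i)" for i
    have split: "(\<Sum>i\<in>I. c' i * v i j) = c' i0 * v i0 j + (\<Sum>i\<in>I - {i0}. c i * v i j)" for j
      using insert.prems(1) i0(1) by (simp add: sum.remove c'_def)
    have "(\<Sum>i\<in>I. c' i * v i j) = (\<Sum>i\<in>I - {i0}. c i * w i j)" if "j \<in> insert j0 J" for j
      unfolding split w_def
      by (simp add: c'_def algebra_simps sum_subtractf sum_distrib_left sum_distrib_right sum_divide_distrib)
    moreover have "(\<Sum>i\<in>I - {i0}. c i * w i j0) = 0"
      using i0(2) by (simp add: w_def)
    ultimately have "\<forall>j\<in>insert j0 J. (\<Sum>i\<in>I. c' i * v i j) = 0"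
      using c(2) by auto
    moreover have "\<exists>i\<in>I. c' i \<noteq> 0"
    proof -
      obtain i where "i \<in> I - {i0}" "c i \<noteq> 0"
        using c(1) by blast
      then show ?thesis
        by (intro bexI[of _ i]) (simp_all add: c'_def)
    qed
    ultimately show ?thesis by blast
  qed
qed

lemma eval2_eq: "eval2 p q = poly (poly p [:snd q:]) (fst q)"
  unfolding eval2_def
proof (induction p rule: pCons_induct)
  case (pCons a p)
  then show ?case by (simp add: map_poly_pCons)
qed simp

lemma eval2_simps [simp]:
  "eval2 (p + p') q = eval2 p q + eval2 p' q"
  "eval2 (p - p') q = eval2 p q - eval2 p' q"
  "eval2 (p * p') q = eval2 p q * eval2 p' q"
  "eval2 (p ^ n) q = eval2 p q ^ n"
  "eval2 0 q = 0"
  "eval2 1 q = 1"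
  "eval2 (sum f A) q = (\<Sum>a\<in>A. eval2 (f a) q)"
  by (simp_all add: eval2_eq poly_sum)

definition const2 :: "real \<Rightarrow> real poly poly" where
  "const2 c = [:[:c:]:]"

definition monom2 :: "nat \<Rightarrow> nat \<Rightarrow> real poly poly" where
  "monom2 i j = monom (monom 1 i) j"

definition coeff2 :: "real poly poly \<Rightarrow> nat \<times> nat \<Rightarrow> real" where
  "coeff2 p ij = coeff (coeff p (snd ij)) (fst ij)"

definition bidegree_le :: "nat \<Rightarrow> nat \<Rightarrow> real poly poly \<Rightarrow> bool" where
  "bidegree_le a b p \<longleftrightarrow> degree p \<le> b \<and> (\<forall>j. degree (coeff p j) \<le> a)"

lemma eval2_const2 [simp]: "eval2 (const2 c) q = c"
  by (simp add: eval2_eq const2_def)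

lemma eval2_monom2 [simp]: "eval2 (monom2 i j) (x, y) = x^i * y^j"
  by (simp add: eval2_eq monom2_def poly_monom)

lemma coeff2_0 [simp]: "coeff2 0 ij = 0"
  unfolding coeff2_def by simp

lemma coeff2_sum [simp]: "coeff2 (sum f A) ij = (\<Sum>a\<in>A. coeff2 (f a) ij)"
  unfolding coeff2_def by (simp add: coeff_sum)

lemma coeff2_const2_mult [simp]: "coeff2 (const2 c * p) ij = c * coeff2 p ij"
  unfolding coeff2_def const2_def by simp

lemma coeff2_monom2 [simp]: "coeff2 (monom2 i j) ij = (if ij = (i, j) then 1 else 0)"
  unfolding coeff2_def monom2_def by (cases ij) auto

lemma coeff2_sum_monom2:
  assumes "finite A" "p \<in> A"
  shows "coeff2 (\<Sum>q\<in>A. const2 (c q) * monom2 (fst q) (snd q)) p = c p"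
proof -
  have "(\<Sum>q\<in>A. c q * (if p = (fst q, snd q) then 1 else 0)) = (\<Sum>q\<in>A. if q = p then c q else 0)"
    by (rule sum.cong) auto
  then show ?thesis using assms by simp
qed

lemma eq_0_if_coeff2_eq_0: "(\<And>i j. coeff2 p (i, j) = 0) \<Longrightarrow> p = 0"
  unfolding coeff2_def by (simp add: poly_eq_iff)

lemma coeff2_eq_0_if_bidegree_le:
  assumes "bidegree_le a b p" "\<not> (i \<le> a \<and> j \<le> b)"
  shows "coeff2 p (i, j) = 0"
proof (cases "j \<le> b")
  case True
  then have "degree (coeff p j) < i"
    using assms unfolding bidegree_le_def by (meson le_trans not_le)
  then show ?thesis unfolding coeff2_def by (simp add: coeff_eq_0)
next
  case False
  then have "degree p < j"
    using assms(1) unfolding bidegree_le_def by simp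
  then show ?thesis unfolding coeff2_def by (simp add: coeff_eq_0)
qed

lemma bidegree_le_mono: "bidegree_le a b p \<Longrightarrow> a \<le> a' \<Longrightarrow> b \<le> b' \<Longrightarrow> bidegree_le a' b' p"
  unfolding bidegree_le_def by (meson order_trans)

lemma bidegree_le_add: "bidegree_le a b p \<Longrightarrow> bidegree_le a b q \<Longrightarrow> bidegree_le a b (p + q)"
  unfolding bidegree_le_def by (auto intro: degree_add_le)

lemma bidegree_le_diff: "bidegree_le a b p \<Longrightarrow> bidegree_le a b q \<Longrightarrow> bidegree_le a b (p - q)"
  unfolding bidegree_le_def by (auto intro: degree_diff_le)

lemma bidegree_le_sum:
  "finite A \<Longrightarrow> (\<And>x. x \<in> A \<Longrightarrow> bidegree_le a b (f x)) \<Longrightarrow> bidegree_le a b (sum f A)"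
  unfolding bidegree_le_def by (auto intro: degree_sum_le simp: coeff_sum)

lemma bidegree_le_mult:
  assumes "bidegree_le a b p" "bidegree_le a' b' q"
  shows "bidegree_le (a + a') (b + b') (p * q)"
  unfolding bidegree_le_def
proof (intro conjI allI)
  show "degree (p * q) \<le> b + b'"
    using assms unfolding bidegree_le_def by (meson add_mono degree_mult_le order_trans)
  show "degree (coeff (p * q) n) \<le> a + a'" for n
    unfolding coeff_mult using assms unfolding bidegree_le_def
    by (intro degree_sum_le) (auto intro: order_trans[OF degree_mult_le] add_mono)
qed

lemma bidegree_le_power: "bidegree_le a b p \<Longrightarrow> bidegree_le (k * a) (k * b) (p ^ k)"
proof (induction k)
  case 0
  then show ?case by (simp add: bidegree_le_def coeff_1)
next
  case (Suc k)
  then show ?case using bidegree_le_mult[of a b p "k * a" "k * b"] by simp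
qed

lemma bidegree_le_const2: "bidegree_le 0 0 (const2 c)"
  unfolding bidegree_le_def const2_def by (simp add: coeff_pCons split: nat.splits)

lemma bidegree_le_const2_mult: "bidegree_le a b p \<Longrightarrow> bidegree_le a b (const2 c * p)"
  using bidegree_le_mult[OF bidegree_le_const2] by simp

lemma bidegree_le_monom2: "bidegree_le i j (monom2 i j)"
  unfolding bidegree_le_def monom2_def by (auto intro: degree_monom_le)

lemma bidegree_le_exists: "\<exists>e. bidegree_le e e p"
proof -
  define e where "e = degree p + (\<Sum>j\<le>degree p. degree (coeff p j))"
  have "degree (coeff p j) \<le> e" for j
    by (cases "j \<le> degree p") (auto simp: e_def coeff_eq_0 intro: trans_le_add2 member_le_sum)
  moreover have "degree p \<le> e"
    by (simp add: e_def)
  ultimately show ?thesis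
    unfolding bidegree_le_def by blast
qed

lemma bidegree_le_linear_dependent:
  assumes "finite I" "(M + 1)^2 < card I" "\<And>i. i \<in> I \<Longrightarrow> bidegree_le M M (V i)"
  obtains c where "\<exists>i\<in>I. c i \<noteq> 0" "(\<Sum>i\<in>I. const2 (c i) * V i) = 0"
proof -
  have "card ({..M} \<times> {..M}) < card I"
    using assms(2) by (simp add: card_cartesian_product power2_eq_square)
  then obtain c where c: "\<exists>i\<in>I. c i \<noteq> 0" "\<forall>j\<in>{..M} \<times> {..M}. (\<Sum>i\<in>I. c i * coeff2 (V i) j) = 0"
    using homogeneous_system_nontrivial_solution[of "{..M} \<times> {..M}" I "\<lambda>i. coeff2 (V i)"] assms(1)
    by auto
  have "coeff2 (\<Sum>i\<in>I. const2 (c i) * V i) (a, b) = 0" for a b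
  proof (cases "a \<le> M \<and> b \<le> M")
    case True
    then show ?thesis using c(2) by simp
  next
    case False
    then show ?thesis
      using assms(1,3) by (intro coeff2_eq_0_if_bidegree_le[OF bidegree_le_sum]) (auto intro: bidegree_le_const2_mult)
  qed
  then show ?thesis
    using that c(1) eq_0_if_coeff2_eq_0 by blast
qed

lemma elimination_count:
  fixes d e N :: nat
  assumes "N = 4 * d * e + 2 * e + e * e + 1"
  shows "(2 * d * N + e + 1)^2 < (N + 1)^2 + (2 * d * N + 1)^2"
proof -
  have "4 * d * e * N + 2 * e + e * e < 4 * d * e * N + N"
    using assms by simp
  also have "\<dots> \<le> N * N"
    using assms by (simp add: algebra_simps)
  finally show ?thesis
    by (simp add: power2_eq_square algebra_simps)
qed

lemma bidegree_le_homogenized_monomial: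
  assumes "bidegree_le d d P1" "bidegree_le d d P2" "bidegree_le d d Q" "a + b \<le> n"
  shows "bidegree_le (n * d) (n * d) (P1^a * P2^b * Q^(n - a - b))"
proof -
  have "bidegree_le (a * d + b * d + (n - a - b) * d) (a * d + b * d + (n - a - b) * d)
      (P1^a * P2^b * Q^(n - a - b))"
    using assms(1-3) by (intro bidegree_le_mult bidegree_le_power)
  moreover have "a * d + b * d + (n - a - b) * d = n * d"
    using assms(4) by (simp flip: add_mult_distrib)
  ultimately show ?thesis by simp
qed

lemma bidegree_le_multiple_monom2:
  assumes "bidegree_le e e g" "i \<le> n" "j \<le> n"
  shows "bidegree_le (n + e) (n + e) (g * monom2 i j)"
  using bidegree_le_mult[OF assms(1) bidegree_le_monom2[of i j]] assms(2,3)
  by (elim bidegree_le_mono) simp_all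

lemma eval2_homogenized_sum:
  assumes "eval2 Q q \<noteq> 0"
  shows "eval2 (\<Sum>p\<in>{..N} \<times> {..N}. const2 (c p) * (P1^fst p * P2^snd p * Q^(2 * N - fst p - snd p))) q
    = eval2 Q q ^ (2 * N) *
      eval2 (\<Sum>p\<in>{..N} \<times> {..N}. const2 (c p) * monom2 (fst p) (snd p)) (eval2 P1 q / eval2 Q q, eval2 P2 q / eval2 Q q)"
proof -
  have "eval2 P1 q ^ i * eval2 P2 q ^ j * eval2 Q q ^ (2 * N - i - j)
      = eval2 Q q ^ (2 * N) * ((eval2 P1 q / eval2 Q q)^i * (eval2 P2 q / eval2 Q q)^j)"
    if "i + j \<le> 2 * N" for i j
  proof -
    have "eval2 Q q ^ (2 * N) = eval2 Q q ^ i * eval2 Q q ^ j * eval2 Q q ^ (2 * N - i - j)"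
      using that by (simp flip: power_add)
    then show ?thesis
      using assms by (simp add: power_divide field_simps)
  qed
  then show ?thesis
    by (auto simp: sum_distrib_left mult_ac intro!: sum.cong)
qed

text \<open>For this \<open>N\<close>, the \<open>(N+1)\<^sup>2\<close> homogenized monomials \<open>P\<^sub>1\<^sup>a P\<^sub>2\<^sup>b Q\<^sup>2\<^sup>N\<^sup>-\<^sup>a\<^sup>-\<^sup>b\<close>
  together with the multiples of \<open>g\<close> of bounded degree outnumber the monomials of the relevant
  bidegree, so a nontrivial combination of the former is a multiple of \<open>g\<close>.\<close>

lemma homogenized_relation:
  assumes "bidegree_le d d P1" "bidegree_le d d P2" "bidegree_le d d Q" "bidegree_le e e g" "g \<noteq> 0"
    and "N = 4 * d * e + 2 * e + e * e + 1"
  obtains c K where "\<exists>p\<in>{..N} \<times> {..N}. c p \<noteq> 0"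
    "(\<Sum>p\<in>{..N} \<times> {..N}. const2 (c p) * (P1^fst p * P2^snd p * Q^(2 * N - fst p - snd p))) = g * K"
proof -
  define I1 I2 where "I1 = {..N} \<times> {..N}" and "I2 = {..2 * d * N} \<times> {..2 * d * N}"
  define V where "V = case_sum (\<lambda>p. P1^fst p * P2^snd p * Q^(2 * N - fst p - snd p))
    (\<lambda>p. g * monom2 (fst p) (snd p))"
  have "bidegree_le (2 * d * N + e) (2 * d * N + e) (V i)" if "i \<in> I1 <+> I2" for i
  proof (cases i)
    case (Inl p)
    with that have "fst p + snd p \<le> 2 * N"
      by (auto simp: I1_def)
    then have "bidegree_le (2 * N * d) (2 * N * d) (V i)"
      using bidegree_le_homogenized_monomial[OF assms(1-3)] by (simp add: V_def Inl)
    then show ?thesis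
      by (rule bidegree_le_mono) simp_all
  next
    case (Inr p)
    with that have "bidegree_le (2 * d * N + e) (2 * d * N + e) (g * monom2 (fst p) (snd p))"
      by (intro bidegree_le_multiple_monom2[OF assms(4)]) (auto simp: I2_def)
    then show ?thesis
      by (simp add: V_def Inr)
  qed
  moreover have "(2 * d * N + e + 1)^2 < card (I1 <+> I2)"
    using elimination_count[OF assms(6)]
    by (simp add: I1_def I2_def card_Plus card_cartesian_product power2_eq_square)
  ultimately obtain c where c: "\<exists>i\<in>I1 <+> I2. c i \<noteq> 0" "(\<Sum>i\<in>I1 <+> I2. const2 (c i) * V i) = 0"
    using bidegree_le_linear_dependent[of "I1 <+> I2" "2 * d * N + e" V]
    by (auto simp: I1_def I2_def)
  define K where "K = (\<Sum>p\<in>I2. const2 (c (Inr p)) * monom2 (fst p) (snd p))"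
  have relation: "(\<Sum>p\<in>I1. const2 (c (Inl p)) * (P1^fst p * P2^snd p * Q^(2 * N - fst p - snd p))) = g * - K"
    using c(2) by (simp add: I1_def I2_def sum.Plus V_def K_def sum_distrib_left mult_ac eq_neg_iff_add_eq_0)
  have nontrivial: "\<exists>p\<in>I1. c (Inl p) \<noteq> 0"
  proof (rule ccontr)
    assume "\<not> (\<exists>p\<in>I1. c (Inl p) \<noteq> 0)"
    then have "g * K = 0"
      using relation by (simp add: const2_def)
    then have "c (Inr p) = 0" if "p \<in> I2" for p
      using coeff2_sum_monom2[of I2 p "\<lambda>p. c (Inr p)"] that assms(5) by (simp add: K_def I2_def)
    with \<open>\<not> (\<exists>p\<in>I1. c (Inl p) \<noteq> 0)\<close> c(1) show False by auto
  qed
  show ?thesis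
    using that[of "\<lambda>p. c (Inl p)" "- K"] nontrivial relation unfolding I1_def by blast
qed

theorem rational_map_image_in_curve:
  assumes "bidegree_le d d P1" "bidegree_le d d P2" "bidegree_le d d Q" "bidegree_le e e g" "g \<noteq> 0"
  obtains H where "H \<noteq> 0"
    "\<And>q. eval2 g q = 0 \<Longrightarrow> eval2 Q q \<noteq> 0 \<Longrightarrow>
       eval2 H (eval2 P1 q / eval2 Q q, eval2 P2 q / eval2 Q q) = 0"
proof -
  define N where "N = 4 * d * e + 2 * e + e * e + 1"
  obtain c K where c: "\<exists>p\<in>{..N} \<times> {..N}. c p \<noteq> 0"
    and relation: "(\<Sum>p\<in>{..N} \<times> {..N}. const2 (c p) * (P1^fst p * P2^snd p * Q^(2 * N - fst p - snd p))) = g * K"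
    using homogenized_relation[OF assms N_def] by blast
  define H where "H = (\<Sum>p\<in>{..N} \<times> {..N}. const2 (c p) * monom2 (fst p) (snd p))"
  have "H \<noteq> 0"
  proof
    assume "H = 0"
    obtain p where "p \<in> {..N} \<times> {..N}" "c p \<noteq> 0"
      using c by blast
    moreover from this have "coeff2 H p = c p"
      unfolding H_def by (intro coeff2_sum_monom2) simp_all
    ultimately show False
      using \<open>H = 0\<close> by simp
  qed
  moreover have "eval2 H (eval2 P1 q / eval2 Q q, eval2 P2 q / eval2 Q q) = 0"
    if "eval2 g q = 0" "eval2 Q q \<noteq> 0" for q
    using arg_cong[OF relation, of "\<lambda>P. eval2 P q"] eval2_homogenized_sum[OF that(2), of c P1 P2 N] that
    by (simp add: H_def)
  ultimately show ?thesis
    using that by blast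
qed

fun complex_power_parts :: "nat \<Rightarrow> real poly poly \<times> real poly poly" where
  "complex_power_parts 0 = (1, 0)"
| "complex_power_parts (Suc k) =
    (monom2 1 0 * fst (complex_power_parts k) - monom2 0 1 * snd (complex_power_parts k),
     monom2 1 0 * snd (complex_power_parts k) + monom2 0 1 * fst (complex_power_parts k))"

lemma eval2_complex_power_parts:
  "eval2 (fst (complex_power_parts k)) (x, y) = Re (Complex x y ^ k)"
  "eval2 (snd (complex_power_parts k)) (x, y) = Im (Complex x y ^ k)"
  by (induction k) simp_all

lemma bidegree_le_complex_power_parts:
  "bidegree_le k k (fst (complex_power_parts k)) \<and> bidegree_le k k (snd (complex_power_parts k))"
proof (induction k)
  case 0
  then show ?case by (simp add: bidegree_le_def coeff_1)
next
  case (Suc k)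
  have "bidegree_le (Suc k) (Suc k) (monom2 i j * p)" if "i + j = 1" "bidegree_le k k p" for i j p
    using bidegree_le_mult[OF bidegree_le_monom2 that(2), of i j] that(1)
    by (elim bidegree_le_mono) auto
  then show ?case
    using Suc.IH by (simp add: bidegree_le_add bidegree_le_diff)
qed

definition re_poly2 :: "complex poly \<Rightarrow> real poly poly" where
  "re_poly2 P = (\<Sum>k\<le>degree P. const2 (Re (coeff P k)) * fst (complex_power_parts k)
      - const2 (Im (coeff P k)) * snd (complex_power_parts k))"

definition im_poly2 :: "complex poly \<Rightarrow> real poly poly" where
  "im_poly2 P = (\<Sum>k\<le>degree P. const2 (Re (coeff P k)) * snd (complex_power_parts k)
      + const2 (Im (coeff P k)) * fst (complex_power_parts k))"

lemma eval2_re_poly2: "eval2 (re_poly2 P) (Re u, Im u) = Re (poly P u)"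
  unfolding re_poly2_def poly_altdef by (simp add: eval2_complex_power_parts Re_sum)

lemma eval2_im_poly2: "eval2 (im_poly2 P) (Re u, Im u) = Im (poly P u)"
  unfolding im_poly2_def poly_altdef by (simp add: eval2_complex_power_parts Im_sum)

lemma bidegree_le_re_poly2: "degree P \<le> m \<Longrightarrow> bidegree_le m m (re_poly2 P)"
  and bidegree_le_im_poly2: "degree P \<le> m \<Longrightarrow> bidegree_le m m (im_poly2 P)"
proof -
  have parts: "bidegree_le m m (fst (complex_power_parts k))" "bidegree_le m m (snd (complex_power_parts k))"
    if "k \<le> m" for k
    using bidegree_le_complex_power_parts[of k] that by (auto elim: bidegree_le_mono)
  show "degree P \<le> m \<Longrightarrow> bidegree_le m m (re_poly2 P)" "degree P \<le> m \<Longrightarrow> bidegree_le m m (im_poly2 P)"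
    unfolding re_poly2_def im_poly2_def
    by (auto intro!: bidegree_le_sum bidegree_le_add bidegree_le_diff bidegree_le_const2_mult parts)
qed

theorem complex_rational_image_in_curve:
  fixes A B :: "complex poly" and g :: "real poly poly"
  assumes "g \<noteq> 0"
  obtains H where "H \<noteq> 0"
    "\<And>u. eval2 g (Re u, Im u) = 0 \<Longrightarrow> poly B u \<noteq> 0 \<Longrightarrow>
       eval2 H (Re (poly A u / poly B u), Im (poly A u / poly B u)) = 0"
proof -
  obtain e where "bidegree_le e e g"
    using bidegree_le_exists by blast
  define m where "m = max (degree A) (degree B)"
  define RA IA RB IB where "RA = re_poly2 A" and "IA = im_poly2 A" and "RB = re_poly2 B" and "IB = im_poly2 B"
  have bd: "bidegree_le m m RA" "bidegree_le m m IA" "bidegree_le m m RB" "bidegree_le m m IB"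
    unfolding RA_def IA_def RB_def IB_def m_def
    by (intro bidegree_le_re_poly2 bidegree_le_im_poly2; simp)+
  have "bidegree_le (m + m) (m + m) (RA * RB + IA * IB)"
    "bidegree_le (m + m) (m + m) (IA * RB - RA * IB)"
    "bidegree_le (m + m) (m + m) (RB * RB + IB * IB)"
    by (intro bidegree_le_add bidegree_le_diff bidegree_le_mult bd)+
  then obtain H where H: "H \<noteq> 0" "\<And>q. eval2 g q = 0 \<Longrightarrow> eval2 (RB * RB + IB * IB) q \<noteq> 0 \<Longrightarrow>
      eval2 H (eval2 (RA * RB + IA * IB) q / eval2 (RB * RB + IB * IB) q,
               eval2 (IA * RB - RA * IB) q / eval2 (RB * RB + IB * IB) q) = 0"
    using rational_map_image_in_curve[OF _ _ _ \<open>bidegree_le e e g\<close> assms] by blast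
  show ?thesis
  proof (rule that[OF H(1)])
    fix u assume "eval2 g (Re u, Im u) = 0" "poly B u \<noteq> 0"
    then show "eval2 H (Re (poly A u / poly B u), Im (poly A u / poly B u)) = 0"
      using H(2)[of "(Re u, Im u)"]
      by (simp add: RA_def IA_def RB_def IB_def eval2_re_poly2 eval2_im_poly2 Re_divide Im_divide
          complex_eq_iff power2_eq_square)
  qed
qed

section \<open>Weakly bialgebraic sets\<close>

lemma is_latticeE:
  assumes "is_lattice L"
  obtains w1 w2 where "complex_lattice w1 w2" "L = complex_lattice.\<Lambda> w1 w2"
proof -
  obtain w1 w2 where "w1 \<noteq> 0" "Im (w2 / w1) \<noteq> 0"
    "L = {of_int m * w1 + of_int n * w2 | m n :: int. True}"
    using assms unfolding is_lattice_def by blast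
  moreover from this have "complex_lattice w1 w2"
    by unfold_locales
  ultimately show ?thesis
    using that complex_lattice.\<Lambda>_eq by metis
qed

lemma wp_rational_in_wp_of_sublattice:
  assumes "is_lattice L" "is_lattice L'" "L' \<subseteq> L"
  obtains A B where "\<And>z. z \<notin> L \<Longrightarrow>
    poly B (wp L' z) \<noteq> 0 \<and> wp L z = poly A (wp L' z) / poly B (wp L' z)"
proof -
  obtain w1 w2 where "complex_lattice w1 w2" and L: "L = complex_lattice.\<Lambda> w1 w2"
    using assms(1) by (rule is_latticeE)
  moreover obtain v1 v2 where "complex_lattice v1 v2" and L': "L' = complex_lattice.\<Lambda> v1 v2"
    using assms(2) by (rule is_latticeE)
  ultimately interpret sublattice w1 w2 v1 v2
    using assms(3) by (simp add: sublattice_def sublattice_axioms_def)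
  show ?thesis
    using wp_rational_in_sublattice_wp that unfolding L L' by metis
qed

lemma PL_image_in_curve_if_rational:
  assumes rational: "\<And>z. z \<notin> L \<Longrightarrow> poly B (wp L' z) \<noteq> 0 \<and> wp L z = poly A (wp L' z) / poly B (wp L' z)"
    and "L' \<subseteq> L" "g \<noteq> 0" "\<And>p. p \<in> S - lattice_pts L' \<Longrightarrow> eval2 g (PL L' p) = 0"
  obtains H where "H \<noteq> 0" "PL L ` (S - lattice_pts L) \<subseteq> zero_set {H}"
proof -
  obtain H where "H \<noteq> 0" and H: "\<And>u. eval2 g (Re u, Im u) = 0 \<Longrightarrow> poly B u \<noteq> 0 \<Longrightarrow>
      eval2 H (Re (poly A u / poly B u), Im (poly A u / poly B u)) = 0"
    using complex_rational_image_in_curve[OF assms(3)] by blast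
  have "eval2 H (PL L p) = 0" if "p \<in> S" "p \<notin> lattice_pts L" for p
  proof -
    define z where "z = Complex (fst p) (snd p)"
    have "z \<notin> L" "p \<notin> lattice_pts L'"
      using that assms(2) by (auto simp: z_def lattice_pts_def)
    then show ?thesis
      using H[of "wp L' z"] rational[of z] assms(4)[of p] that(1)
      by (simp add: PL_def z_def)
  qed
  then have "PL L ` (S - lattice_pts L) \<subseteq> zero_set {H}"
    unfolding zero_set_def by blast
  with \<open>H \<noteq> 0\<close> show ?thesis by (rule that)
qed

theorem lemma2p8p3:
  fixes L L' :: "complex set" and S :: "(real \<times> real) set"
  assumes "is_lattice L" and "is_lattice L'" and "L' \<subseteq> L"
    and "weakly_bialgebraic L' S"
  shows "weakly_bialgebraic L S"
proof -
  obtain A B where rational: "\<And>z. z \<notin> L \<Longrightarrow>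
      poly B (wp L' z) \<noteq> 0 \<and> wp L z = poly A (wp L' z) / poly B (wp L' z)"
    using wp_rational_in_wp_of_sublattice[OF assms(1-3)] by blast
  obtain F G g where "finite F" "S = zero_set F" "g \<in> G" "g \<noteq> 0"
    "PL L' ` (S - lattice_pts L') \<subseteq> zero_set G"
    using assms(4) unfolding weakly_bialgebraic_def by (elim conjE exE bexE) blast
  then have "\<And>p. p \<in> S - lattice_pts L' \<Longrightarrow> eval2 g (PL L' p) = 0"
    unfolding zero_set_def by blast
  then obtain H where "H \<noteq> 0" "PL L ` (S - lattice_pts L) \<subseteq> zero_set {H}"
    using PL_image_in_curve_if_rational[OF rational assms(3) \<open>g \<noteq> 0\<close>] by metis
  then have "\<exists>F G. finite F \<and> finite G \<and> S = zero_set F \<and> (\<exists>g\<in>G. g \<noteq> 0) \<and>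
      PL L ` (S - lattice_pts L) \<subseteq> zero_set G"
    using \<open>finite F\<close> \<open>S = zero_set F\<close> by blast
  with assms(4) show ?thesis
    unfolding weakly_bialgebraic_def by (elim conjE) (intro conjI)
qed

end
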